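(* Assume CH. If $\mathcal{I}$ is an unboring ideal, then there is an uncountable Mr\'owka space in $\mathrm{FinBW}(\mathcal{I})$.
   Context: An ideal on an infinite countable set $X$ is a family $\mathcal{I}\subseteq\mathcal{P}(X)$ closed under subsets and finite unions, containing all finite subsets, with $X\notin\mathcal{I}$. A space $X$ is in $\mathrm{FinBW}(\mathcal{I})$ if $X$ is Hausdorff and for every sequence $(x_n)_{n\in\bigcup\mathcal{I}}$ in $X$ there is $A\notin\mathcal{I}$ with $(x_n)_{n\in A}$ convergent in $X$. $\mathrm{Fin}^2$: ideal on $\omega^2$ of all $A$ with only finitely many $n$ such that $\{m:(n,m)\in A\}$ is infinite. $\mathcal{BI}$: ideal on $\omega^3$ of all $A$ for which there is $k$ with $\{(j,l):(i,j,l)\in A\}\in\mathrm{Fin}^2$ for $i<k$ and finite for $i\ge k$. $\mathcal{I}\sqsubseteq\mathcal{J}$: there is a bijection $f:\bigcup\mathcal{J}\to\bigcup\mathcal{I}$ with $f^{-1}[A]\in\mathcal{J}$ for all $A\in\mathcal{I}$. $\mathcal{I}$ is unboring if $\mathcal{BI}\not\sqsubseteq\mathcal{I}$. A Mr\'owka space is $\Phi(\mathcal{A})$ for an infinite almost disjoint family $\mathcal{A}$ of infinite subsets of $\omega$: underlying set $\omega\cup\mathcal{A}\cup\{\infty\}$, points of $\omega$ isolated, basic neighbourhoods of $A\in\mathcal{A}$ are $\{A\}\cup(A\setminus F)$ ($F\subseteq\omega$ finite), of $\infty$ are $\{\infty\}\cup(\mathcal{A}\setminus G)\cup(\omega\setminus(F\cup\bigcup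 G))$ ($F\subseteq\omega$, $G\subseteq\mathcal{A}$ finite). *)

theory Defs
  imports "HOL-Analysis.Analysis" "HOL-Library.Equipollence"
begin

definition CH :: bool where
  "CH \<longleftrightarrow> (\<forall>A :: real set. uncountable A \<longrightarrow> A \<approx> (UNIV :: real set))"

definition is_ideal :: "'a set \<Rightarrow> 'a set set \<Rightarrow> bool" where
  "is_ideal X I \<longleftrightarrow>
     I \<subseteq> Pow X \<and>
     (\<forall>A\<in>I. \<forall>B. B \<subseteq> A \<longrightarrow> B \<in> I) \<and>
     (\<forall>A\<in>I. \<forall>B\<in>I. A \<union> B \<in> I) \<and>
     (\<forall>F. F \<subseteq> X \<and> finite F \<longrightarrow> F \<in> I) \<and>
     X \<notin> I"

definition ideal_below :: "'a set set \<Rightarrow> 'b set set \<Rightarrow> bool" where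
  "ideal_below I J \<longleftrightarrow>
     (\<exists>f. bij_betw f (\<Union>J) (\<Union>I) \<and> (\<forall>A\<in>I. f -` A \<inter> \<Union>J \<in> J))"

definition Fin2 :: "(nat \<times> nat) set set" where
  "Fin2 = {A. finite {n. infinite {m. (n, m) \<in> A}}}"

definition BI :: "(nat \<times> nat \<times> nat) set set" where
  "BI = {A. \<exists>k. (\<forall>i<k. {(j, l). (i, j, l) \<in> A} \<in> Fin2) \<and>
                 (\<forall>i\<ge>k. finite {(j, l). (i, j, l) \<in> A})}"

definition unboring :: "'a set set \<Rightarrow> bool" where
  "unboring I \<longleftrightarrow> \<not> ideal_below BI I"

definition FinBW :: "'b topology \<Rightarrow> 'a set set \<Rightarrow> bool" where
  "FinBW T I \<longleftrightarrow> Hausdorff_space T \<and>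
     (\<forall>x. (\<forall>n\<in>\<Union>I. x n \<in> topspace T) \<longrightarrow>
        (\<exists>A. A \<subseteq> \<Union>I \<and> A \<notin> I \<and>
           (\<exists>y\<in>topspace T. \<forall>U. openin T U \<and> y \<in> U \<longrightarrow> finite {n\<in>A. x n \<notin> U})))"

definition almost_disjoint_family :: "nat set set \<Rightarrow> bool" where
  "almost_disjoint_family \<A> \<longleftrightarrow> infinite \<A> \<and> (\<forall>A\<in>\<A>. infinite A) \<and>
     (\<forall>A\<in>\<A>. \<forall>B\<in>\<A>. A \<noteq> B \<longrightarrow> finite (A \<inter> B))"

text \<open>Points of a Mrowka space: elements of omega, elements of the family, and infinity.\<close>
datatype mpoint = Pt nat | Ad "nat set" | Infty

definition mrowka_carrier :: "nat set set \<Rightarrow> mpoint set" where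
  "mrowka_carrier \<A> = range Pt \<union> Ad ` \<A> \<union> {Infty}"

definition mrowka_basic_nbhd :: "nat set set \<Rightarrow> mpoint \<Rightarrow> mpoint set \<Rightarrow> bool" where
  "mrowka_basic_nbhd \<A> p N \<longleftrightarrow>
     (\<exists>n. p = Pt n \<and> N = {Pt n}) \<or>
     (\<exists>A\<in>\<A>. \<exists>F. finite F \<and> p = Ad A \<and> N = {Ad A} \<union> Pt ` (A - F)) \<or>
     (\<exists>F G. finite F \<and> finite G \<and> G \<subseteq> \<A> \<and> p = Infty \<and>
        N = {Infty} \<union> Ad ` (\<A> - G) \<union> Pt ` (UNIV - (F \<union> \<Union>G)))"

definition Mrowka :: "nat set set \<Rightarrow> mpoint topology" where
  "Mrowka \<A> = topology (\<lambda>U. U \<subseteq> mrowka_carrier \<A> \<and>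
      (\<forall>p\<in>U. \<exists>N. mrowka_basic_nbhd \<A> p N \<and> N \<subseteq> U))"

end

(* Under CH, P(omega) has a well-order whose initial segments are all countable. Along it an
   almost disjoint family A is built: the stage of a set N, which codes the integer terms of a
   sequence, looks at the countable family C built so far, and if an I-positive, finite-to-one
   part Z of the sequence has its values in a set D almost disjoint from C, such a D is added;
   then the subsequence on Z converges to the point D of Phi(A).
   Let x be a sequence in Phi(A) without I-positive convergent subsequence and C the family at
   the stage coding x. Sort the indices by the position of the term: an integer outside the
   union of C, a point of A, infinity, or an integer whose first member of C is the k-th one.
   Constant subsequences and finite-to-one subsequences into A or into a member of C converge,
   and no I-positive integer part escapes C; hence I contains the preimages of the generators
   of BI under (level, point). Reindexing the infinite fibres of this pattern gives a bijection
   witnessing that BI is below I, so I is not unboring. *)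

theory Submission
  imports Defs
begin

unbundle cardinal_syntax

section \<open>Almost disjoint families under CH\<close>

text \<open>In the cardinal order on \<open>Pow \<nat>\<close> every initial segment is smaller than
  the continuum, hence countable by CH.\<close>

lemma CH_well_order_countable_initial_segments:
  assumes "CH"
  shows "\<exists>r. Well_order r \<and> Field r = (UNIV :: nat set set) \<and> (\<forall>a. countable (underS r a))"
proof (intro exI conjI allI)
  let ?r = "|UNIV :: nat set set|"
  show "Well_order ?r"
    by (rule card_of_Well_order)
  show "Field ?r = UNIV"
    by (rule Field_card_of)
  fix a
  show "countable (underS ?r a)"
  proof (rule ccontr)
    assume uncountable: "uncountable (underS ?r a)"
    obtain g :: "nat set \<Rightarrow> real" where g: "bij g"
      using nat_sets_eqpoll_reals unfolding eqpoll_def by blast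
    then have inj: "inj_on g (underS ?r a)"
      by (meson bij_is_inj inj_on_subset subset_UNIV)
    then have "g ` underS ?r a \<approx> (UNIV :: real set)"
      using assms uncountable countable_image_inj_on unfolding CH_def by blast
    then have "underS ?r a \<approx> (UNIV :: nat set set)"
      using inj nat_sets_eqpoll_reals
      by (meson eqpoll_sym eqpoll_trans inj_on_image_eqpoll_self)
    then have "( |underS ?r a|, ?r) \<in> ordIso"
      by (simp add: eqpoll_iff_card_of_ordIso)
    moreover have "( |underS ?r a|, ?r) \<in> ordLess"
      using card_of_underS card_of_card_order_on Field_card_of
      by (metis UNIV_I)
    ultimately show False
      using not_ordLess_ordIso by blast
  qed
qed

definition almost_disjoint_from :: "nat set set \<Rightarrow> nat set \<Rightarrow> bool" where
  "almost_disjoint_from \<C> D \<longleftrightarrow> infinite D \<and> (\<forall>C\<in>\<C>. finite (D \<inter> C))"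

lemma almost_disjoint_family_iff:
  "almost_disjoint_family \<A> \<longleftrightarrow>
     infinite \<A> \<and> (\<forall>A\<in>\<A>. infinite A) \<and> pairwise (\<lambda>A B. finite (A \<inter> B)) \<A>"
  by (simp add: almost_disjoint_family_def pairwise_def)

lemma countable_almost_disjoint_family_exists:
  "\<exists>\<B>. almost_disjoint_family \<B> \<and> countable \<B>"
proof -
  define col where "col k = prod_encode ` ({k} \<times> UNIV)" for k
  have inj_encode: "inj_on prod_encode A" for A
    by (meson inj_on_subset inj_prod_encode subset_UNIV)
  have infinite_col: "infinite (col k)" for k
    unfolding col_def using finite_imageD[OF _ inj_encode, of "{k} \<times> UNIV"]
    by (auto simp: finite_cartesian_product_iff)
  have disjoint_col: "col k \<inter> col l = {}" if "k \<noteq> l" for k l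
    using that unfolding col_def by auto
  have "inj col"
    by (metis Int_absorb disjoint_col finite.emptyI infinite_col injI)
  have "almost_disjoint_family (range col)"
    unfolding almost_disjoint_family_def
  proof (intro conjI ballI impI)
    show "infinite (range col)"
      using \<open>inj col\<close> by (simp add: finite_image_iff)
    show "infinite A" if "A \<in> range col" for A
      using that infinite_col by blast
    show "finite (A \<inter> B)" if "A \<in> range col" "B \<in> range col" "A \<noteq> B" for A B
      using that disjoint_col by (metis finite.emptyI rangeE)
  qed
  then show ?thesis
    by blast
qed

lemma almost_disjoint_family_coinfinite_Union:
  assumes ad: "almost_disjoint_family \<C>" and "finite \<F>" "\<F> \<subseteq> \<C>"
  shows "infinite (- \<Union>\<F>)"
proof -
  have "\<C> - \<F> \<noteq> {}"
    using ad \<open>finite \<F>\<close> finite_subset[of \<C> \<F>] unfolding almost_disjoint_family_def by auto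
  then obtain C where C: "C \<in> \<C>" "C \<notin> \<F>"
    by blast
  have "finite (C \<inter> F)" if "F \<in> \<F>" for F
  proof -
    have "C \<noteq> F" "F \<in> \<C>"
      using C that \<open>\<F> \<subseteq> \<C>\<close> by auto
    then show ?thesis
      using ad C(1) unfolding almost_disjoint_family_def by blast
  qed
  then have "finite (\<Union>F\<in>\<F>. C \<inter> F)"
    by (rule finite_UN_I[OF \<open>finite \<F>\<close>])
  then have "finite (C \<inter> \<Union>\<F>)"
    by (simp only: Int_Union)
  moreover have "infinite C"
    using ad C(1) unfolding almost_disjoint_family_def by blast
  ultimately have "infinite (C - C \<inter> \<Union>\<F>)"
    using Diff_infinite_finite by auto
  then show ?thesis
    by (rule infinite_super[rotated]) blast
qed

lemma almost_disjoint_from_exists: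
  assumes ad: "almost_disjoint_family \<C>" and "countable \<C>"
  shows "\<exists>D. almost_disjoint_from \<C> D"
proof -
  have "\<C> \<noteq> {}"
    using ad unfolding almost_disjoint_family_def by auto
  define C where "C k = from_nat_into \<C> k" for k
  have "\<forall>k. \<exists>m. m > k \<and> m \<notin> (\<Union>i\<le>k. C i)"
  proof
    fix k
    have "C ` {..k} \<subseteq> \<C>"
      using from_nat_into[OF \<open>\<C> \<noteq> {}\<close>] unfolding C_def by blast
    then have "infinite (- \<Union>(C ` {..k}))"
      by (intro almost_disjoint_family_coinfinite_Union[OF ad]) simp
    then show "\<exists>m. m > k \<and> m \<notin> (\<Union>i\<le>k. C i)"
      unfolding infinite_nat_iff_unbounded by auto
  qed
  then obtain n where n: "\<And>k. n k > k" "\<And>k. n k \<notin> (\<Union>i\<le>k. C i)"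
    by metis
  have "range n \<inter> C i \<subseteq> n ` {..<i}" for i
  proof
    fix m
    assume "m \<in> range n \<inter> C i"
    then obtain k where k: "m = n k" "n k \<in> C i"
      by blast
    have "\<not> i \<le> k"
      using n(2)[of k] k(2) by auto
    then show "m \<in> n ` {..<i}"
      using k(1) by simp
  qed
  then have "finite (range n \<inter> C i)" for i
    by (meson finite_lessThan finite_imageI finite_subset)
  moreover have "infinite (range n)"
    using n(1) unfolding infinite_nat_iff_unbounded by (meson rangeI)
  moreover have "\<exists>i. C' = C i" if "C' \<in> \<C>" for C'
    using from_nat_into_surj[OF \<open>countable \<C>\<close> that] unfolding C_def by metis
  ultimately have "almost_disjoint_from \<C> (range n)"
    unfolding almost_disjoint_from_def by metis
  then show ?thesis ..
qed

lemma pairwise_almost_disjoint_stages: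
  assumes total: "\<And>M N. (M, N) \<in> r \<or> (N, M) \<in> r"
    and base: "pairwise (\<lambda>A B. finite (A \<inter> B)) \<B>"
    and fresh: "\<And>M. M \<in> T \<Longrightarrow> almost_disjoint_from (\<B> \<union> S ` underS r M) (S M)"
  shows "pairwise (\<lambda>A B. finite (A \<inter> B)) (\<B> \<union> S ` T)"
proof -
  have earlier: "finite (S M \<inter> C)" if "M \<in> T" "C \<in> \<B> \<union> S ` underS r M" for M C
    using fresh that unfolding almost_disjoint_from_def by blast
  have stages: "finite (S M \<inter> S N)" if "M \<in> T" "N \<in> T" "S M \<noteq> S N" for M N
  proof (cases "(N, M) \<in> r")
    case True
    then show ?thesis
      using that earlier[of M "S N"] by (auto simp: underS_def)
  next
    case False
    then have "(M, N) \<in> r"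
      using total by blast
    then show ?thesis
      using that earlier[of N "S M"] by (auto simp: underS_def Int_commute)
  qed
  have later: "finite (S M \<inter> C)" if "M \<in> T" "C \<in> \<B> \<union> S ` T" "C \<noteq> S M" for M C
    using that earlier[of M C] stages[of M] by auto
  show ?thesis
  proof (rule pairwiseI)
    fix A B
    assume A: "A \<in> \<B> \<union> S ` T" and B: "B \<in> \<B> \<union> S ` T" and "A \<noteq> B"
    then consider "A \<in> \<B>" "B \<in> \<B>" | M where "M \<in> T" "A = S M" | M where "M \<in> T" "B = S M"
      by blast
    then show "finite (A \<inter> B)"
    proof cases
      case 1
      then show ?thesis
        using base \<open>A \<noteq> B\<close> unfolding pairwise_def by blast
    next
      case (2 M)
      then show ?thesis
        using later[of M B] B \<open>A \<noteq> B\<close> by blast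
    next
      case (3 M)
      then show ?thesis
        using later[of M A] A \<open>A \<noteq> B\<close> by (metis Int_commute)
    qed
  qed
qed

lemma inj_if_almost_disjoint_from_earlier:
  assumes total: "\<And>M N. (M, N) \<in> r \<or> (N, M) \<in> r"
    and fresh: "\<And>N. almost_disjoint_from (S ` underS r N) (S N)"
  shows "inj S"
proof (rule injI)
  fix M N
  assume "S M = S N"
  moreover have "S M \<noteq> S N" if "(M, N) \<in> r" "M \<noteq> N" for M N
  proof -
    have "S M \<in> S ` underS r N"
      using that unfolding underS_def by blast
    then show ?thesis
      using fresh[of N] unfolding almost_disjoint_from_def by auto
  qed
  ultimately show "M = N"
    using total by metis
qed

lemma almost_disjoint_transfinite_extension:
  fixes r :: "'i rel" and step :: "nat set set \<Rightarrow> 'i \<Rightarrow> nat set"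
  assumes wo: "Well_order r" "Field r = UNIV" and segments: "\<And>N. countable (underS r N)"
    and base: "almost_disjoint_family \<B>" "countable \<B>"
    and step: "\<And>\<C> N. almost_disjoint_family \<C> \<Longrightarrow> countable \<C> \<Longrightarrow> almost_disjoint_from \<C> (step \<C> N)"
  shows "\<exists>S. almost_disjoint_family (\<B> \<union> range S) \<and> inj S \<and>
           (\<forall>N. countable (\<B> \<union> S ` underS r N) \<and> S N = step (\<B> \<union> S ` underS r N) N)"
proof -
  have wf: "wf (r - Id)"
    using wo(1) by (simp add: wo_rel.WF wo_rel_def)
  have total: "(M, N) \<in> r \<or> (N, M) \<in> r" for M N
    using wo by (metis UNIV_I wo_rel.TOTALS wo_rel_def)
  define S where "S = wfrec (r - Id) (\<lambda>S N. step (\<B> \<union> S ` underS r N) N)"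
  define Pre where "Pre N = \<B> \<union> S ` underS r N" for N
  have S_eq: "S N = step (Pre N) N" for N
  proof -
    have "cut S (r - Id) N ` underS r N = S ` underS r N"
      by (rule image_cong) (auto simp: underS_def cut_apply)
    then show ?thesis
      unfolding S_def Pre_def by (subst wfrec[OF wf]) simp
  qed
  have countable_Pre: "countable (Pre N)" for N
    unfolding Pre_def using base(2) segments by blast
  have family: "almost_disjoint_family (\<B> \<union> S ` T)"
    if "\<And>M. M \<in> T \<Longrightarrow> almost_disjoint_from (Pre M) (S M)" for T
    using pairwise_almost_disjoint_stages[OF total, of \<B> T S] that base(1)
    unfolding almost_disjoint_family_iff almost_disjoint_from_def Pre_def by blast
  have fresh: "almost_disjoint_from (Pre N) (S N)" for N
    using wf
  proof (induction N rule: wf_induct_rule)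
    case (less N)
    have "almost_disjoint_from (Pre M) (S M)" if "M \<in> underS r N" for M
      using less.IH that by (simp add: underS_def)
    from family[OF this] have "almost_disjoint_family (Pre N)"
      by (simp add: Pre_def)
    then show ?case
      using S_eq step countable_Pre by metis
  qed
  have "almost_disjoint_from (S ` underS r N) (S N)" for N
    using fresh[of N] unfolding almost_disjoint_from_def Pre_def by blast
  then have "inj S"
    by (rule inj_if_almost_disjoint_from_earlier[OF total])
  show ?thesis
  proof (intro exI[of _ S] conjI allI)
    show "almost_disjoint_family (\<B> \<union> range S)"
      using family[of UNIV] fresh by blast
    show "inj S"
      by fact
    show "countable (\<B> \<union> S ` underS r N)" "S N = step (\<B> \<union> S ` underS r N) N" for N
      using countable_Pre[of N] S_eq[of N] by (simp_all add: Pre_def)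
  qed
qed

text \<open>At the stage of \<open>N\<close> a \<open>G\<close>-witness over the countable family built so far is added if
  there is one, and otherwise any fresh set, so that the family still grows at every stage.\<close>

lemma CH_almost_disjoint_diagonalisation:
  fixes G :: "nat set \<Rightarrow> nat set set \<Rightarrow> nat set \<Rightarrow> bool"
  assumes "CH" and G: "\<And>N \<C> D. G N \<C> D \<Longrightarrow> almost_disjoint_from \<C> D"
  shows "\<exists>\<A>. almost_disjoint_family \<A> \<and> uncountable \<A> \<and>
           (\<forall>N. \<exists>\<C>\<subseteq>\<A>. countable \<C> \<and> ((\<exists>D. G N \<C> D) \<longrightarrow> (\<exists>D\<in>\<A>. G N \<C> D)))"
proof -
  obtain r :: "nat set rel" where r: "Well_order r" "Field r = UNIV" "\<And>N. countable (underS r N)"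
    using CH_well_order_countable_initial_segments[OF \<open>CH\<close>] by blast
  obtain \<B> where \<B>: "almost_disjoint_family \<B>" "countable \<B>"
    using countable_almost_disjoint_family_exists by blast
  define step where "step \<C> N =
    (if \<exists>D. G N \<C> D then SOME D. G N \<C> D else SOME D. almost_disjoint_from \<C> D)" for \<C> N
  have step_fresh: "almost_disjoint_from \<C> (step \<C> N)"
    if "almost_disjoint_family \<C>" "countable \<C>" for \<C> N
    using G almost_disjoint_from_exists[OF that] unfolding step_def by (metis (mono_tags))
  obtain S where S: "almost_disjoint_family (\<B> \<union> range S)" "inj S"
    and stage: "\<And>N. countable (\<B> \<union> S ` underS r N) \<and> S N = step (\<B> \<union> S ` underS r N) N"
    using almost_disjoint_transfinite_extension[where step = step, OF r \<B> step_fresh] by blast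
  have "uncountable (range S)"
    using \<open>inj S\<close> nat_sets_eqpoll_reals uncountable_UNIV_real
    by (metis countable_eqpoll countable_image_inj_on eqpoll_sym)
  then have uncountable: "uncountable (\<B> \<union> range S)"
    by simp
  have witness: "\<exists>D\<in>\<B> \<union> range S. G N (\<B> \<union> S ` underS r N) D"
    if "\<exists>D. G N (\<B> \<union> S ` underS r N) D" for N
    using stage[of N] someI_ex[OF that] that unfolding step_def by auto
  have "\<exists>\<C>\<subseteq>\<B> \<union> range S. countable \<C> \<and> ((\<exists>D. G N \<C> D) \<longrightarrow> (\<exists>D\<in>\<B> \<union> range S. G N \<C> D))" for N
  proof (intro exI[of _ "\<B> \<union> S ` underS r N"] conjI impI)
    show "\<B> \<union> S ` underS r N \<subseteq> \<B> \<union> range S"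
      by blast
    show "countable (\<B> \<union> S ` underS r N)"
      using stage by blast
  qed (rule witness)
  with S(1) uncountable show ?thesis
    by blast
qed

definition finite_to_one_on :: "('a \<Rightarrow> 'b) \<Rightarrow> 'a set \<Rightarrow> bool" where
  "finite_to_one_on f A \<longleftrightarrow> (\<forall>y. finite {a\<in>A. f a = y})"

lemma finite_to_one_on_compD:
  assumes "finite_to_one_on (\<lambda>a. g (f a)) A"
  shows "finite_to_one_on f A"
  unfolding finite_to_one_on_def
proof
  fix y
  have "{a\<in>A. f a = y} \<subseteq> {a\<in>A. g (f a) = g y}"
    by blast
  moreover have "finite {a\<in>A. g (f a) = g y}"
    using assms unfolding finite_to_one_on_def by blast
  ultimately show "finite {a\<in>A. f a = y}"
    by (rule finite_subset)
qed

lemma finite_to_one_on_subset: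
  assumes "finite_to_one_on f A" "B \<subseteq> A"
  shows "finite_to_one_on f B"
  unfolding finite_to_one_on_def
proof
  fix y
  have "{a\<in>B. f a = y} \<subseteq> {a\<in>A. f a = y}"
    using assms(2) by blast
  moreover have "finite {a\<in>A. f a = y}"
    using assms(1) unfolding finite_to_one_on_def by blast
  ultimately show "finite {a\<in>B. f a = y}"
    by (rule finite_subset)
qed

lemma finite_to_one_on_cong:
  assumes "\<And>a. a \<in> A \<Longrightarrow> f a = g a"
  shows "finite_to_one_on f A \<longleftrightarrow> finite_to_one_on g A"
proof -
  have "{a\<in>A. f a = y} = {a\<in>A. g a = y}" for y
    using assms by auto
  then show ?thesis
    unfolding finite_to_one_on_def by simp
qed

lemma finite_to_one_on_vimage:
  assumes "inj_on f X" "\<And>y. finite {s\<in>S. g s = y}"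
  shows "finite_to_one_on (\<lambda>a. g (f a)) (f -` S \<inter> X)"
  unfolding finite_to_one_on_def
proof
  fix y
  have "{a\<in>f -` S \<inter> X. g (f a) = y} = f -` {s\<in>S. g s = y} \<inter> X"
    by auto
  then show "finite {a\<in>f -` S \<inter> X. g (f a) = y}"
    using finite_vimage_IntI[OF assms(2) assms(1)] by simp
qed

lemma finite_to_one_on_finite_fibres: "finite_to_one_on u {a\<in>X. finite {a'\<in>X. u a' = u a}}"
  unfolding finite_to_one_on_def
proof
  fix v
  show "finite {a\<in>{a\<in>X. finite {a'\<in>X. u a' = u a}}. u a = v}"
  proof (cases "finite {a\<in>X. u a = v}")
    case True
    moreover have "{a\<in>{a\<in>X. finite {a'\<in>X. u a' = u a}}. u a = v} \<subseteq> {a\<in>X. u a = v}"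
      by blast
    ultimately show ?thesis
      by (rule finite_subset[rotated])
  next
    case False
    then have "{a\<in>{a\<in>X. finite {a'\<in>X. u a' = u a}}. u a = v} = {}"
      by auto
    then show ?thesis
      by (metis finite.emptyI)
  qed
qed

section \<open>Mrowka spaces\<close>

lemma mrowka_basic_nbhd_Pt_iff [simp]:
  "mrowka_basic_nbhd \<A> (Pt n) N \<longleftrightarrow> N = {Pt n}"
  by (auto simp: mrowka_basic_nbhd_def)

lemma mrowka_basic_nbhd_Ad_iff [simp]:
  "mrowka_basic_nbhd \<A> (Ad A) N \<longleftrightarrow> A \<in> \<A> \<and> (\<exists>F. finite F \<and> N = {Ad A} \<union> Pt ` (A - F))"
  by (auto simp: mrowka_basic_nbhd_def)

lemma mrowka_basic_nbhd_Infty_iff [simp]: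
  "mrowka_basic_nbhd \<A> Infty N \<longleftrightarrow>
     (\<exists>F G. finite F \<and> finite G \<and> G \<subseteq> \<A> \<and> N = {Infty} \<union> Ad ` (\<A> - G) \<union> Pt ` (UNIV - (F \<union> \<Union>G)))"
  by (auto simp: mrowka_basic_nbhd_def)

lemma mrowka_basic_nbhd_AdI:
  "A \<in> \<A> \<Longrightarrow> finite F \<Longrightarrow> mrowka_basic_nbhd \<A> (Ad A) ({Ad A} \<union> Pt ` (A - F))"
  by auto

lemma mrowka_basic_nbhd_InftyI:
  "finite F \<Longrightarrow> finite G \<Longrightarrow> G \<subseteq> \<A> \<Longrightarrow>
     mrowka_basic_nbhd \<A> Infty ({Infty} \<union> Ad ` (\<A> - G) \<union> Pt ` (UNIV - (F \<union> \<Union>G)))"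
  by auto

lemma mrowka_basic_nbhd_subset:
  "mrowka_basic_nbhd \<A> p N \<Longrightarrow> p \<in> N \<and> N \<subseteq> mrowka_carrier \<A>"
  by (auto simp: mrowka_basic_nbhd_def mrowka_carrier_def)

lemma mrowka_basic_nbhd_exists:
  assumes "p \<in> mrowka_carrier \<A>"
  shows "\<exists>N. mrowka_basic_nbhd \<A> p N"
proof (cases p)
  case (Ad A)
  then show ?thesis
    using assms mrowka_basic_nbhd_AdI[of A \<A> "{}"] by (auto simp: mrowka_carrier_def)
next
  case Infty
  then show ?thesis
    using mrowka_basic_nbhd_InftyI[of "{}" "{}" \<A>] by blast
qed simp

lemma mrowka_basic_nbhd_Int:
  assumes "mrowka_basic_nbhd \<A> p N\<^sub>1" "mrowka_basic_nbhd \<A> p N\<^sub>2"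
  shows "\<exists>N. mrowka_basic_nbhd \<A> p N \<and> N \<subseteq> N\<^sub>1 \<inter> N\<^sub>2"
proof (cases p)
  case (Pt n)
  then show ?thesis
    using assms by auto
next
  case (Ad A)
  with assms obtain F\<^sub>1 F\<^sub>2 where "A \<in> \<A>" "finite F\<^sub>1" "finite F\<^sub>2"
    and "N\<^sub>1 = {Ad A} \<union> Pt ` (A - F\<^sub>1)" "N\<^sub>2 = {Ad A} \<union> Pt ` (A - F\<^sub>2)"
    by auto
  then show ?thesis
    using Ad mrowka_basic_nbhd_AdI[of A \<A> "F\<^sub>1 \<union> F\<^sub>2"] by blast
next
  case Infty
  with assms obtain F\<^sub>1 G\<^sub>1 F\<^sub>2 G\<^sub>2 where "finite F\<^sub>1" "finite G\<^sub>1" "G\<^sub>1 \<subseteq> \<A>" "finite F\<^sub>2" "finite G\<^sub>2" "G\<^sub>2 \<subseteq> \<A>"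
    and "N\<^sub>1 = {Infty} \<union> Ad ` (\<A> - G\<^sub>1) \<union> Pt ` (UNIV - (F\<^sub>1 \<union> \<Union>G\<^sub>1))"
    and "N\<^sub>2 = {Infty} \<union> Ad ` (\<A> - G\<^sub>2) \<union> Pt ` (UNIV - (F\<^sub>2 \<union> \<Union>G\<^sub>2))"
    by auto
  then show ?thesis
    using Infty mrowka_basic_nbhd_InftyI[of "F\<^sub>1 \<union> F\<^sub>2" "G\<^sub>1 \<union> G\<^sub>2" \<A>] by blast
qed

lemma openin_Mrowka:
  "openin (Mrowka \<A>) U \<longleftrightarrow>
     U \<subseteq> mrowka_carrier \<A> \<and> (\<forall>p\<in>U. \<exists>N. mrowka_basic_nbhd \<A> p N \<and> N \<subseteq> U)"
proof -
  define L where "L U \<longleftrightarrow> U \<subseteq> mrowka_carrier \<A> \<and> (\<forall>p\<in>U. \<exists>N. mrowka_basic_nbhd \<A> p N \<and> N \<subseteq> U)"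
    for U
  have "L (S \<inter> T)" if "L S" "L T" for S T
  proof -
    have "\<exists>N. mrowka_basic_nbhd \<A> p N \<and> N \<subseteq> S \<inter> T" if "p \<in> S \<inter> T" for p
    proof -
      have "p \<in> S" "p \<in> T"
        using that by auto
      obtain N\<^sub>1 where "mrowka_basic_nbhd \<A> p N\<^sub>1" "N\<^sub>1 \<subseteq> S"
        using \<open>L S\<close> \<open>p \<in> S\<close> unfolding L_def by blast
      moreover obtain N\<^sub>2 where "mrowka_basic_nbhd \<A> p N\<^sub>2" "N\<^sub>2 \<subseteq> T"
        using \<open>L T\<close> \<open>p \<in> T\<close> unfolding L_def by blast
      ultimately obtain N where "mrowka_basic_nbhd \<A> p N" "N \<subseteq> N\<^sub>1 \<inter> N\<^sub>2"
        using mrowka_basic_nbhd_Int by metis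
      then show ?thesis
        using \<open>N\<^sub>1 \<subseteq> S\<close> \<open>N\<^sub>2 \<subseteq> T\<close> by blast
    qed
    then show ?thesis
      using \<open>L S\<close> unfolding L_def by blast
  qed
  moreover have "L (\<Union>\<K>)" if "\<forall>K\<in>\<K>. L K" for \<K>
  proof -
    have "\<exists>N. mrowka_basic_nbhd \<A> p N \<and> N \<subseteq> \<Union>\<K>" if "p \<in> \<Union>\<K>" for p
    proof -
      obtain K where "K \<in> \<K>" "p \<in> K"
        using \<open>p \<in> \<Union>\<K>\<close> by blast
      then obtain N where "mrowka_basic_nbhd \<A> p N" "N \<subseteq> K"
        using \<open>\<forall>K\<in>\<K>. L K\<close> unfolding L_def by blast
      then show ?thesis
        using \<open>K \<in> \<K>\<close> by blast
    qed
    moreover have "\<Union>\<K> \<subseteq> mrowka_carrier \<A>"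
      using that unfolding L_def by blast
    ultimately show ?thesis
      unfolding L_def by blast
  qed
  ultimately have "istopology L"
    unfolding istopology_def by blast
  then show ?thesis
    by (simp add: Mrowka_def L_def[abs_def])
qed

lemma topspace_Mrowka: "topspace (Mrowka \<A>) = mrowka_carrier \<A>"
proof -
  have "openin (Mrowka \<A>) (mrowka_carrier \<A>)"
    unfolding openin_Mrowka using mrowka_basic_nbhd_exists mrowka_basic_nbhd_subset by blast
  then show ?thesis
    by (metis openin_Mrowka openin_subset openin_topspace subset_antisym)
qed

lemma openin_Mrowka_basic_nbhd:
  assumes ad: "pairwise (\<lambda>A B. finite (A \<inter> B)) \<A>" and N: "mrowka_basic_nbhd \<A> p N"
  shows "openin (Mrowka \<A>) N"
  unfolding openin_Mrowka
proof (intro conjI ballI)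
  show "N \<subseteq> mrowka_carrier \<A>"
    using N mrowka_basic_nbhd_subset by blast
  fix q
  assume "q \<in> N"
  show "\<exists>M. mrowka_basic_nbhd \<A> q M \<and> M \<subseteq> N"
  proof (cases "q = p \<or> q \<in> range Pt")
    case True
    with N \<open>q \<in> N\<close> show ?thesis
      by auto
  next
    case False
    with N \<open>q \<in> N\<close> have "p = Infty"
      by (cases p) auto
    with N obtain F G where FG: "finite F" "finite G" "G \<subseteq> \<A>"
      and N_eq: "N = {Infty} \<union> Ad ` (\<A> - G) \<union> Pt ` (UNIV - (F \<union> \<Union>G))"
      by auto
    with False \<open>q \<in> N\<close> \<open>p = Infty\<close> have "q \<in> Ad ` (\<A> - G)"
      by blast
    then obtain B where q: "q = Ad B" "B \<in> \<A> - G"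
      by blast
    have "finite (B \<inter> C)" if "C \<in> G" for C
    proof (rule pairwiseD(1)[OF ad])
      show "B \<in> \<A>" "C \<in> \<A>" "B \<noteq> C"
        using q(2) FG(3) that by auto
    qed
    then have "finite (\<Union>C\<in>G. B \<inter> C)"
      by (rule finite_UN_I[OF FG(2)])
    then have "finite (B \<inter> \<Union>G)"
      by (simp only: Int_Union)
    then have "finite (F \<union> B \<inter> \<Union>G)"
      using FG(1) by blast
    then show ?thesis
      using q N_eq mrowka_basic_nbhd_AdI[of B \<A> "F \<union> B \<inter> \<Union>G"] by blast
  qed
qed

lemma mrowka_basic_nbhd_avoiding_Pt:
  assumes "p \<in> mrowka_carrier \<A>" "p \<noteq> Pt n"
  shows "\<exists>N. mrowka_basic_nbhd \<A> p N \<and> Pt n \<notin> N"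
proof (cases p)
  case (Ad A)
  then show ?thesis
    using assms mrowka_basic_nbhd_AdI[of A \<A> "{n}"] by (auto simp: mrowka_carrier_def)
next
  case Infty
  then show ?thesis
    using mrowka_basic_nbhd_InftyI[of "{n}" "{}" \<A>] by blast
qed (use assms in simp)

lemma mrowka_disjoint_basic_nbhds_Ad:
  assumes "A \<in> \<A>" "B \<in> \<A>" "A \<noteq> B" "finite (A \<inter> B)"
  shows "\<exists>N M. mrowka_basic_nbhd \<A> (Ad A) N \<and> mrowka_basic_nbhd \<A> (Ad B) M \<and> N \<inter> M = {}"
proof (intro exI conjI)
  show "mrowka_basic_nbhd \<A> (Ad A) ({Ad A} \<union> Pt ` (A - A \<inter> B))"
    using assms(1,4) by (rule mrowka_basic_nbhd_AdI)
  show "mrowka_basic_nbhd \<A> (Ad B) ({Ad B} \<union> Pt ` (B - A \<inter> B))"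
    using assms(2,4) by (rule mrowka_basic_nbhd_AdI)
  show "({Ad A} \<union> Pt ` (A - A \<inter> B)) \<inter> ({Ad B} \<union> Pt ` (B - A \<inter> B)) = {}"
    using \<open>A \<noteq> B\<close> by auto
qed

lemma mrowka_disjoint_basic_nbhds_Ad_Infty:
  assumes "A \<in> \<A>"
  shows "\<exists>N M. mrowka_basic_nbhd \<A> (Ad A) N \<and> mrowka_basic_nbhd \<A> Infty M \<and> N \<inter> M = {}"
  using mrowka_basic_nbhd_AdI[of A \<A> "{}"] mrowka_basic_nbhd_InftyI[of "{}" "{A}" \<A>] assms by blast

lemma mrowka_disjoint_basic_nbhds:
  assumes ad: "pairwise (\<lambda>A B. finite (A \<inter> B)) \<A>"
    and carrier: "p \<in> mrowka_carrier \<A>" "q \<in> mrowka_carrier \<A>" and "p \<noteq> q"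
  shows "\<exists>N M. mrowka_basic_nbhd \<A> p N \<and> mrowka_basic_nbhd \<A> q M \<and> N \<inter> M = {}"
proof (cases "\<exists>n. p = Pt n \<or> q = Pt n")
  case True
  then obtain n where "p = Pt n \<or> q = Pt n"
    by blast
  then show ?thesis
  proof
    assume "p = Pt n"
    moreover obtain M where "mrowka_basic_nbhd \<A> q M" "Pt n \<notin> M"
      using mrowka_basic_nbhd_avoiding_Pt carrier \<open>p \<noteq> q\<close> \<open>p = Pt n\<close> by metis
    ultimately show ?thesis
      by auto
  next
    assume "q = Pt n"
    moreover obtain N where "mrowka_basic_nbhd \<A> p N" "Pt n \<notin> N"
      using mrowka_basic_nbhd_avoiding_Pt carrier \<open>p \<noteq> q\<close> \<open>q = Pt n\<close> by metis
    ultimately show ?thesis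
      by auto
  qed
next
  case False
  from False \<open>p \<noteq> q\<close> consider A B where "p = Ad A" "q = Ad B" | A where "p = Ad A" "q = Infty"
    | B where "p = Infty" "q = Ad B"
    by (cases p; cases q) auto
  then show ?thesis
  proof cases
    case (1 A B)
    then have "A \<in> \<A>" "B \<in> \<A>" "A \<noteq> B"
      using carrier \<open>p \<noteq> q\<close> unfolding mrowka_carrier_def by auto
    moreover from this have "finite (A \<inter> B)"
      by (rule pairwiseD(1)[OF ad])
    ultimately show ?thesis
      unfolding 1 by (rule mrowka_disjoint_basic_nbhds_Ad)
  next
    case (2 A)
    then have "A \<in> \<A>"
      using carrier by (auto simp: mrowka_carrier_def)
    then show ?thesis
      unfolding 2 by (rule mrowka_disjoint_basic_nbhds_Ad_Infty)
  next
    case (3 B)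
    then have "B \<in> \<A>"
      using carrier by (auto simp: mrowka_carrier_def)
    then obtain N M where "mrowka_basic_nbhd \<A> (Ad B) N" "mrowka_basic_nbhd \<A> Infty M" "M \<inter> N = {}"
      using mrowka_disjoint_basic_nbhds_Ad_Infty by (metis Int_commute)
    then show ?thesis
      using 3 by blast
  qed
qed

lemma Hausdorff_space_Mrowka:
  assumes "pairwise (\<lambda>A B. finite (A \<inter> B)) \<A>"
  shows "Hausdorff_space (Mrowka \<A>)"
  unfolding Hausdorff_space_def topspace_Mrowka disjnt_def
  using mrowka_disjoint_basic_nbhds[OF assms] openin_Mrowka_basic_nbhd[OF assms] mrowka_basic_nbhd_subset
  by metis

lemma eventually_cofinite_inf_principal:
  "eventually P (inf cofinite (principal A)) \<longleftrightarrow> finite {a\<in>A. \<not> P a}"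
  by (simp add: eventually_inf_principal eventually_cofinite conj_commute)

lemma FinBW_iff_limitin:
  "FinBW T I \<longleftrightarrow> Hausdorff_space T \<and>
     (\<forall>x. (\<forall>n\<in>\<Union>I. x n \<in> topspace T) \<longrightarrow>
        (\<exists>A\<subseteq>\<Union>I. A \<notin> I \<and> (\<exists>y. limitin T x y (inf cofinite (principal A)))))"
  unfolding FinBW_def limitin_def eventually_cofinite_inf_principal by (simp add: Bex_def)

lemma limitin_Mrowka_Ad:
  assumes "C \<in> \<A>" and into: "x ` A \<subseteq> Pt ` C" and "finite_to_one_on x A"
  shows "limitin (Mrowka \<A>) x (Ad C) (inf cofinite (principal A))"
  unfolding limitin_def eventually_cofinite_inf_principal topspace_Mrowka
proof (intro conjI allI impI)
  show "Ad C \<in> mrowka_carrier \<A>"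
    using \<open>C \<in> \<A>\<close> by (simp add: mrowka_carrier_def)
  fix U
  assume "openin (Mrowka \<A>) U \<and> Ad C \<in> U"
  then obtain N where "mrowka_basic_nbhd \<A> (Ad C) N" "N \<subseteq> U"
    unfolding openin_Mrowka by blast
  then obtain F where "finite F" and nbhd: "{Ad C} \<union> Pt ` (C - F) \<subseteq> U"
    by auto
  have fibres: "finite {a\<in>A. x a = y}" for y
    using \<open>finite_to_one_on x A\<close> unfolding finite_to_one_on_def by blast
  have "{a\<in>A. x a \<notin> U} \<subseteq> (\<Union>m\<in>F. {a\<in>A. x a = Pt m})"
  proof
    fix a
    assume a: "a \<in> {a\<in>A. x a \<notin> U}"
    then obtain m where "m \<in> C" "x a = Pt m"
      using into by blast
    with a nbhd show "a \<in> (\<Union>m\<in>F. {a\<in>A. x a = Pt m})"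
      by blast
  qed
  moreover have "finite (\<Union>m\<in>F. {a\<in>A. x a = Pt m})"
    using fibres \<open>finite F\<close> by simp
  ultimately show "finite {a\<in>A. x a \<notin> U}"
    by (rule finite_subset)
qed

lemma limitin_Mrowka_Infty:
  assumes into: "x ` A \<subseteq> Ad ` \<A>" and "finite_to_one_on x A"
  shows "limitin (Mrowka \<A>) x Infty (inf cofinite (principal A))"
  unfolding limitin_def eventually_cofinite_inf_principal topspace_Mrowka
proof (intro conjI allI impI)
  show "Infty \<in> mrowka_carrier \<A>"
    by (simp add: mrowka_carrier_def)
  fix U
  assume "openin (Mrowka \<A>) U \<and> Infty \<in> U"
  then obtain N where "mrowka_basic_nbhd \<A> Infty N" "N \<subseteq> U"
    unfolding openin_Mrowka by blast
  then obtain F G where "finite G"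
    and nbhd: "{Infty} \<union> Ad ` (\<A> - G) \<union> Pt ` (UNIV - (F \<union> \<Union>G)) \<subseteq> U"
    by auto
  have fibres: "finite {a\<in>A. x a = y}" for y
    using \<open>finite_to_one_on x A\<close> unfolding finite_to_one_on_def by blast
  have "{a\<in>A. x a \<notin> U} \<subseteq> (\<Union>E\<in>G. {a\<in>A. x a = Ad E})"
  proof
    fix a
    assume a: "a \<in> {a\<in>A. x a \<notin> U}"
    then obtain E where "E \<in> \<A>" "x a = Ad E"
      using into by blast
    with a nbhd show "a \<in> (\<Union>E\<in>G. {a\<in>A. x a = Ad E})"
      by blast
  qed
  moreover have "finite (\<Union>E\<in>G. {a\<in>A. x a = Ad E})"
    using fibres \<open>finite G\<close> by simp
  ultimately show "finite {a\<in>A. x a \<notin> U}"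
    by (rule finite_subset)
qed

section \<open>Recognising BI below an ideal\<close>

lemma ideal_mono: "is_ideal X I \<Longrightarrow> A \<in> I \<Longrightarrow> B \<subseteq> A \<Longrightarrow> B \<in> I"
  unfolding is_ideal_def by blast

lemma ideal_Un: "is_ideal X I \<Longrightarrow> A \<in> I \<Longrightarrow> B \<in> I \<Longrightarrow> A \<union> B \<in> I"
  unfolding is_ideal_def by blast

lemma ideal_finite: "is_ideal X I \<Longrightarrow> finite F \<Longrightarrow> F \<subseteq> X \<Longrightarrow> F \<in> I"
  unfolding is_ideal_def by blast

lemma ideal_subset: "is_ideal X I \<Longrightarrow> A \<in> I \<Longrightarrow> A \<subseteq> X"
  unfolding is_ideal_def by blast

lemma ideal_not_carrier: "is_ideal X I \<Longrightarrow> X \<notin> I"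
  unfolding is_ideal_def by blast

lemma ideal_cover: "is_ideal X I \<Longrightarrow> Z \<subseteq> A \<union> B \<Longrightarrow> A \<in> I \<Longrightarrow> B \<in> I \<Longrightarrow> Z \<in> I"
  by (meson ideal_Un ideal_mono)

lemma ideal_UN:
  assumes "is_ideal X I" "finite S" "\<And>s. s \<in> S \<Longrightarrow> F s \<in> I"
  shows "(\<Union>s\<in>S. F s) \<in> I"
  using assms(2,3)
proof (induction S rule: finite_induct)
  case empty
  then show ?case
    using ideal_finite[OF assms(1), of "{}"] by simp
next
  case (insert s S)
  then show ?case
    using ideal_Un[OF assms(1)] by simp
qed

lemma Union_ideal:
  assumes "is_ideal X I"
  shows "\<Union>I = X"
proof -
  have "{x} \<in> I" if "x \<in> X" for x
    using ideal_finite[OF assms] that by simp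
  then show ?thesis
    using ideal_subset[OF assms] by blast
qed

lemma ideal_positive_infinite: "is_ideal X I \<Longrightarrow> A \<subseteq> X \<Longrightarrow> A \<notin> I \<Longrightarrow> infinite A"
  using ideal_finite by blast

lemma Union_BI: "\<Union>BI = UNIV"
proof -
  have "{x} \<in> BI" for x :: "nat \<times> nat \<times> nat"
  proof -
    have "finite {(j, l). (i, j, l) \<in> {x}}" for i
      by (rule finite_subset[of _ "{snd x}"]) auto
    then show ?thesis
      unfolding BI_def by (intro CollectI exI[of _ 0]) simp
  qed
  then show ?thesis
    by blast
qed

lemma BI_finitely_many_infinite_fibres:
  assumes "A \<in> BI"
  obtains k where "finite {(i, j). infinite {l. (i, j, l) \<in> A}}"
    and "\<And>i. k \<le> i \<Longrightarrow> finite {(j, l). (i, j, l) \<in> A}"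
proof -
  obtain k where low: "\<And>i. i < k \<Longrightarrow> {(j, l). (i, j, l) \<in> A} \<in> Fin2"
    and high: "\<And>i. k \<le> i \<Longrightarrow> finite {(j, l). (i, j, l) \<in> A}"
    using assms unfolding BI_def by blast
  have high_fibre: "finite {l. (i, j, l) \<in> A}" if "k \<le> i" for i j
  proof -
    have "finite (Pair j -` {(j, l). (i, j, l) \<in> A})"
      using high[OF that] by (rule finite_vimageI) (simp add: inj_def)
    then show ?thesis
      by (simp add: vimage_def)
  qed
  have "{(i, j). infinite {l. (i, j, l) \<in> A}} \<subseteq> Sigma {..<k} (\<lambda>i. {j. infinite {l. (i, j, l) \<in> A}})"
  proof
    fix ij
    assume "ij \<in> {(i, j). infinite {l. (i, j, l) \<in> A}}"
    then obtain i j where ij: "ij = (i, j)" "infinite {l. (i, j, l) \<in> A}"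
      by blast
    then have "i < k"
      using high_fibre[of i j] by (meson not_le)
    with ij show "ij \<in> Sigma {..<k} (\<lambda>i. {j. infinite {l. (i, j, l) \<in> A}})"
      by simp
  qed
  moreover have "finite {j. infinite {l. (i, j, l) \<in> A}}" if "i < k" for i
    using low[OF that] unfolding Fin2_def by simp
  then have "finite (Sigma {..<k} (\<lambda>i. {j. infinite {l. (i, j, l) \<in> A}}))"
    by (intro finite_SigmaI) auto
  ultimately show ?thesis
    using that high finite_subset by blast
qed

lemma BI_decomposition:
  assumes "A \<in> BI"
  obtains P C k R where "finite P" "A \<subseteq> {(i, j, l). (i, j) \<in> P} \<union> ((\<Union>i<k. C i) \<union> R)"
    and "\<And>i. C i \<subseteq> {s. fst s = i}" "\<And>i j. finite {s\<in>C i. fst (snd s) = j}"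
    and "\<And>i. finite {s\<in>R. fst s = i}"
proof -
  obtain k where P: "finite {(i, j). infinite {l. (i, j, l) \<in> A}}"
    and high: "\<And>i. k \<le> i \<Longrightarrow> finite {(j, l). (i, j, l) \<in> A}"
    using BI_finitely_many_infinite_fibres[OF assms] by blast
  define P where "P = {(i, j). infinite {l. (i, j, l) \<in> A}}"
  define C where "C i = {s\<in>A. fst s = i \<and> (i, fst (snd s)) \<notin> P}" for i
  define R where "R = {s\<in>A. k \<le> fst s}"
  have "A \<subseteq> {(i, j, l). (i, j) \<in> P} \<union> ((\<Union>i<k. C i) \<union> R)"
    unfolding C_def R_def by (auto simp: not_le)
  moreover have "finite {s\<in>C i. fst (snd s) = j}" for i j
  proof (cases "(i, j) \<in> P")
    case True
    then have "{s\<in>C i. fst (snd s) = j} = {}"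
      unfolding C_def by auto
    then show ?thesis
      by (metis finite.emptyI)
  next
    case False
    then have "finite ((\<lambda>l. (i, j, l)) ` {l. (i, j, l) \<in> A})"
      unfolding P_def by simp
    moreover have "{s\<in>C i. fst (snd s) = j} \<subseteq> (\<lambda>l. (i, j, l)) ` {l. (i, j, l) \<in> A}"
      unfolding C_def by force
    ultimately show ?thesis
      by (rule finite_subset[rotated])
  qed
  moreover have "finite {s\<in>R. fst s = i}" for i
  proof (cases "k \<le> i")
    case True
    then have "finite (Pair i ` {(j, l). (i, j, l) \<in> A})"
      using high by simp
    moreover have "{s\<in>R. fst s = i} \<subseteq> Pair i ` {(j, l). (i, j, l) \<in> A}"
      unfolding R_def by force
    ultimately show ?thesis
      by (rule finite_subset[rotated])
  next
    case False
    then have "{s\<in>R. fst s = i} = {}"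
      unfolding R_def by auto
    then show ?thesis
      by (metis finite.emptyI)
  qed
  moreover have "C i \<subseteq> {s. fst s = i}" for i
    unfolding C_def by blast
  ultimately show ?thesis
    using that P unfolding P_def by blast
qed

text \<open>The assumptions say that \<open>I\<close> contains the preimages under \<open>\<lambda>a. (b a, p a)\<close> of the
  generators of \<open>BI\<close>: the fibres, the subsets of a column meeting every fibre finitely,
  and the sets meeting every column finitely.\<close>

locale BI_pattern =
  fixes X :: "'a set" and I :: "'a set set" and b p :: "'a \<Rightarrow> nat"
  assumes ideal: "is_ideal X I" and countable: "countable X"
    and fibre_in_ideal: "\<And>i j. {a\<in>X. b a = i \<and> p a = j} \<in> I"
    and column_in_ideal: "\<And>i Z. Z \<subseteq> {a\<in>X. b a = i} \<Longrightarrow> finite_to_one_on p Z \<Longrightarrow> Z \<in> I"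
    and row_in_ideal: "\<And>Z. Z \<subseteq> X \<Longrightarrow> finite_to_one_on b Z \<Longrightarrow> Z \<in> I"
begin

lemma vimage_BI_in_ideal:
  fixes t :: "'a \<Rightarrow> nat"
  assumes inj: "inj_on (\<lambda>a. (b a, p a, t a)) X" and "A \<in> BI"
  shows "(\<lambda>a. (b a, p a, t a)) -` A \<inter> X \<in> I"
proof -
  define f where "f = (\<lambda>a. (b a, p a, t a))"
  obtain P C k R where "finite P" and cover: "A \<subseteq> {(i, j, l). (i, j) \<in> P} \<union> ((\<Union>i<k. C i) \<union> R)"
    and C: "\<And>i. C i \<subseteq> {s. fst s = i}" "\<And>i j. finite {s\<in>C i. fst (snd s) = j}"
    and R: "\<And>i. finite {s\<in>R. fst s = i}"
    using BI_decomposition[OF \<open>A \<in> BI\<close>] by blast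
  have "f -` {(i, j, l). (i, j) \<in> P} \<inter> X = (\<Union>(i, j)\<in>P. {a\<in>X. b a = i \<and> p a = j})"
    unfolding f_def by auto
  also have "\<dots> \<in> I"
    using \<open>finite P\<close> by (rule ideal_UN[OF ideal]) (auto simp: fibre_in_ideal split: prod.split)
  finally have fibres: "f -` {(i, j, l). (i, j) \<in> P} \<inter> X \<in> I" .
  have "f -` C i \<inter> X \<in> I" for i
  proof (rule column_in_ideal)
    show "f -` C i \<inter> X \<subseteq> {a\<in>X. b a = i}"
      using C(1)[of i] unfolding f_def by auto
    show "finite_to_one_on p (f -` C i \<inter> X)"
      using finite_to_one_on_vimage[OF inj C(2), of i] unfolding f_def by simp
  qed
  then have columns: "(\<Union>i<k. f -` C i \<inter> X) \<in> I"
    by (rule ideal_UN[OF ideal finite_lessThan])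
  have rows: "f -` R \<inter> X \<in> I"
  proof (rule row_in_ideal)
    show "f -` R \<inter> X \<subseteq> X"
      by blast
    show "finite_to_one_on b (f -` R \<inter> X)"
      using finite_to_one_on_vimage[OF inj R] unfolding f_def by simp
  qed
  have "f -` A \<inter> X \<subseteq> (f -` {(i, j, l). (i, j) \<in> P} \<inter> X) \<union> ((\<Union>i<k. f -` C i \<inter> X) \<union> (f -` R \<inter> X))"
  proof
    fix a
    assume "a \<in> f -` A \<inter> X"
    then have "f a \<in> {(i, j, l). (i, j) \<in> P} \<union> ((\<Union>i<k. C i) \<union> R)" "a \<in> X"
      using cover by auto
    then show "a \<in> (f -` {(i, j, l). (i, j) \<in> P} \<inter> X) \<union> ((\<Union>i<k. f -` C i \<inter> X) \<union> (f -` R \<inter> X))"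
      by blast
  qed
  then have "f -` A \<inter> X \<in> I"
    by (rule ideal_cover[OF ideal _ fibres ideal_Un[OF ideal columns rows]])
  then show ?thesis
    unfolding f_def .
qed

lemma ideal_below_BI_if_infinite_fibres:
  assumes infinite_fibre: "\<And>i j. infinite {a\<in>X. b a = i \<and> p a = j}"
  shows "ideal_below BI I"
proof -
  define F where "F i j = {a\<in>X. b a = i \<and> p a = j}" for i j
  define f where "f a = (b a, p a, to_nat_on (F (b a) (p a)) a)" for a
  have bij_F: "bij_betw (to_nat_on (F i j)) (F i j) UNIV" for i j
  proof (rule to_nat_on_infinite)
    show "countable (F i j)"
      using countable by (rule countable_subset[rotated]) (auto simp: F_def)
    show "infinite (F i j)"
      using infinite_fibre by (simp add: F_def)
  qed
  have "inj_on f X"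
  proof (rule inj_onI)
    fix a a'
    assume "a \<in> X" "a' \<in> X" "f a = f a'"
    then have "a \<in> F (b a) (p a)" "a' \<in> F (b a) (p a)"
      and "to_nat_on (F (b a) (p a)) a = to_nat_on (F (b a) (p a)) a'"
      unfolding f_def F_def by auto
    then show "a = a'"
      using inj_onD[OF bij_betw_imp_inj_on[OF bij_F]] by blast
  qed
  moreover have "(i, j, l) \<in> f ` X" for i j l
  proof -
    obtain a where "a \<in> F i j" "to_nat_on (F i j) a = l"
      using bij_F[of i j] unfolding bij_betw_def by (metis UNIV_I imageE)
    then have "a \<in> X" "(i, j, l) = f a"
      unfolding f_def F_def by auto
    then show ?thesis
      by (rule image_eqI[rotated])
  qed
  then have "f ` X = UNIV"
    by auto
  ultimately have "bij_betw f X UNIV"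
    by (simp add: bij_betw_def)
  moreover have "f -` A \<inter> X \<in> I" if "A \<in> BI" for A
    using vimage_BI_in_ideal[OF \<open>inj_on f X\<close>[unfolded f_def] that] unfolding f_def by simp
  ultimately show ?thesis
    unfolding ideal_below_def Union_BI Union_ideal[OF ideal] by blast
qed

end

lemma ideal_below_BI_if_finite_to_one_nat_label:
  fixes c :: "'a \<Rightarrow> nat"
  assumes ideal: "is_ideal X I" and "countable X"
    and infinite_fibre: "\<And>n. infinite {a\<in>X. c a = n}"
    and fibre: "\<And>n. {a\<in>X. c a = n} \<in> I"
    and thin: "\<And>Z. Z \<subseteq> X \<Longrightarrow> finite_to_one_on c Z \<Longrightarrow> Z \<in> I"
  shows "ideal_below BI I"
proof -
  have fibre_eq: "{a\<in>X. fst (prod_decode (c a)) = i \<and> snd (prod_decode (c a)) = j} =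
      {a\<in>X. c a = prod_encode (i, j)}" for i j
    by (metis prod.collapse prod_decode_inverse prod_encode_inverse fst_conv snd_conv)
  interpret BI_pattern X I "\<lambda>a. fst (prod_decode (c a))" "\<lambda>a. snd (prod_decode (c a))"
  proof
    show "{a\<in>X. fst (prod_decode (c a)) = i \<and> snd (prod_decode (c a)) = j} \<in> I" for i j
      unfolding fibre_eq by (rule fibre)
    show "Z \<in> I" if "Z \<subseteq> {a\<in>X. fst (prod_decode (c a)) = i}"
      and "finite_to_one_on (\<lambda>a. snd (prod_decode (c a))) Z" for i Z
    proof (rule thin)
      show "Z \<subseteq> X"
        using that(1) by blast
      show "finite_to_one_on c Z"
        using that(2) by (rule finite_to_one_on_compD[of "\<lambda>n. snd (prod_decode n)"])
    qed
    show "Z \<in> I" if "Z \<subseteq> X" and "finite_to_one_on (\<lambda>a. fst (prod_decode (c a))) Z" for Z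
      using that(1) finite_to_one_on_compD[of "\<lambda>n. fst (prod_decode n)", OF that(2)] by (rule thin)
  qed (fact ideal \<open>countable X\<close>)+
  show ?thesis
    by (rule ideal_below_BI_if_infinite_fibres) (simp add: fibre_eq infinite_fibre)
qed

lemma infinitely_many_infinite_fibres:
  assumes ideal: "is_ideal X I"
    and fibre: "\<And>v. {a\<in>X. u a = v} \<in> I"
    and thin: "\<And>Z. Z \<subseteq> X \<Longrightarrow> finite_to_one_on u Z \<Longrightarrow> Z \<in> I"
  shows "infinite {v. infinite {a\<in>X. u a = v}}"
proof
  define V where "V = {v. infinite {a\<in>X. u a = v}}"
  assume "finite {v. infinite {a\<in>X. u a = v}}"
  then have "(\<Union>v\<in>V. {a\<in>X. u a = v}) \<in> I"
    unfolding V_def[symmetric] using fibre by (rule ideal_UN[OF ideal])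
  moreover have "{a\<in>X. finite {a'\<in>X. u a' = u a}} \<in> I"
    using finite_to_one_on_finite_fibres[of u X] by (rule thin[rotated]) blast
  moreover have "X \<subseteq> (\<Union>v\<in>V. {a\<in>X. u a = v}) \<union> {a\<in>X. finite {a'\<in>X. u a' = u a}}"
    unfolding V_def by blast
  ultimately have "X \<in> I"
    using ideal_cover[OF ideal] by blast
  then show False
    using ideal_not_carrier[OF ideal] by blast
qed

lemma ideal_below_BI_if_finite_to_one_sets_in_ideal:
  assumes ideal: "is_ideal X I" and "countable X"
    and fibre: "\<And>v. {a\<in>X. u a = v} \<in> I"
    and thin: "\<And>Z. Z \<subseteq> X \<Longrightarrow> finite_to_one_on u Z \<Longrightarrow> Z \<in> I"
  shows "ideal_below BI I"
proof -
  define V where "V = {v. infinite {a\<in>X. u a = v}}"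
  define J where "J = {a\<in>X. finite {a'\<in>X. u a' = u a}}"
  have "J \<in> I"
    unfolding J_def using finite_to_one_on_finite_fibres[of u X] by (rule thin[rotated]) blast
  have "infinite V"
    unfolding V_def using ideal fibre thin by (rule infinitely_many_infinite_fibres)
  have "V \<subseteq> u ` X"
    unfolding V_def by (auto intro: rev_image_eqI dest: not_finite_existsD)
  then have "countable V"
    using \<open>countable X\<close> countable_subset by blast
  define g where "g v = (if v \<in> V then to_nat_on V v else 0)" for v
  define e where "e n = from_nat_into V n" for n
  have e: "e n \<in> V" "to_nat_on V (e n) = n" for n
    unfolding e_def using \<open>infinite V\<close> \<open>countable V\<close> by (auto intro: from_nat_into)
  have fibre_lower: "{a\<in>X. u a = e n} \<subseteq> {a\<in>X. g (u a) = n}" for n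
    unfolding g_def using e by auto
  have fibre_upper: "{a\<in>X. g (u a) = n} \<subseteq> {a\<in>X. u a = e n} \<union> J" for n
  proof
    fix a
    assume "a \<in> {a\<in>X. g (u a) = n}"
    then show "a \<in> {a\<in>X. u a = e n} \<union> J"
      using from_nat_into_to_nat_on[OF \<open>countable V\<close>, of "u a"]
      unfolding g_def J_def V_def e_def by (auto split: if_splits)
  qed
  show ?thesis
  proof (rule ideal_below_BI_if_finite_to_one_nat_label[OF ideal \<open>countable X\<close>])
    show "infinite {a\<in>X. g (u a) = n}" for n
    proof
      assume "finite {a\<in>X. g (u a) = n}"
      then have "finite {a\<in>X. u a = e n}"
        using fibre_lower by (rule finite_subset[rotated])
      then show False
        using e(1) unfolding V_def by simp
    qed
    show "{a\<in>X. g (u a) = n} \<in> I" for n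
      using ideal_cover[OF ideal fibre_upper fibre \<open>J \<in> I\<close>] .
    show "Z \<in> I" if "Z \<subseteq> X" "finite_to_one_on (\<lambda>a. g (u a)) Z" for Z
      using that(1) finite_to_one_on_compD[of g u, OF that(2)] by (rule thin)
  qed
qed

context BI_pattern
begin

definition rich :: "nat \<Rightarrow> bool" where
  "rich i \<longleftrightarrow> {a\<in>X. b a = i} \<notin> I"

definition label :: "'a \<Rightarrow> nat \<times> nat" where
  "label a = (b a, if rich (b a) then p a else 0)"

definition infinite_rows :: "nat \<Rightarrow> nat set" where
  "infinite_rows i = {j. infinite {a\<in>X. b a = i \<and> p a = j}}"

lemma label_fibre_in_ideal: "{a\<in>X. label a = v} \<in> I"
proof (cases "rich (fst v)")
  case True
  then have "{a\<in>X. label a = v} = {a\<in>X. b a = fst v \<and> p a = snd v}"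
    unfolding label_def by (auto simp: prod_eq_iff)
  then show ?thesis
    using fibre_in_ideal by simp
next
  case False
  then have "{a\<in>X. b a = fst v} \<in> I"
    unfolding rich_def by simp
  moreover have "{a\<in>X. label a = v} \<subseteq> {a\<in>X. b a = fst v}"
    unfolding label_def by auto
  ultimately show ?thesis
    by (rule ideal_mono[OF ideal])
qed

lemma outside_infinite_rows_in_ideal: "{a\<in>X. b a = i \<and> p a \<notin> infinite_rows i} \<in> I"
proof (rule column_in_ideal)
  show "{a\<in>X. b a = i \<and> p a \<notin> infinite_rows i} \<subseteq> {a\<in>X. b a = i}"
    by blast
  have "{a\<in>X. b a = i \<and> p a \<notin> infinite_rows i} =
      {a\<in>{a\<in>X. b a = i}. finite {a'\<in>{a\<in>X. b a = i}. p a' = p a}}"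
    unfolding infinite_rows_def by auto
  then show "finite_to_one_on p {a\<in>X. b a = i \<and> p a \<notin> infinite_rows i}"
    using finite_to_one_on_finite_fibres[of p "{a\<in>X. b a = i}"] by simp
qed

lemma infinite_infinite_rows:
  assumes "rich i"
  shows "infinite (infinite_rows i)"
proof
  assume "finite (infinite_rows i)"
  then have "(\<Union>j\<in>infinite_rows i. {a\<in>X. b a = i \<and> p a = j}) \<in> I"
    using fibre_in_ideal by (rule ideal_UN[OF ideal])
  moreover have "{a\<in>X. b a = i} \<subseteq>
      (\<Union>j\<in>infinite_rows i. {a\<in>X. b a = i \<and> p a = j}) \<union> {a\<in>X. b a = i \<and> p a \<notin> infinite_rows i}"
    by blast
  ultimately have "{a\<in>X. b a = i} \<in> I"
    using ideal_cover[OF ideal _ _ outside_infinite_rows_in_ideal] by blast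
  then show False
    using assms unfolding rich_def by blast
qed

lemma nonrich_column_finite:
  assumes "finite_to_one_on label Z" "\<not> rich i"
  shows "finite {a\<in>Z. b a = i}"
proof -
  have "{a\<in>Z. b a = i} \<subseteq> {a\<in>Z. label a = (i, 0)}"
    using assms(2) unfolding label_def by auto
  moreover have "finite {a\<in>Z. label a = (i, 0)}"
    using assms(1) unfolding finite_to_one_on_def by blast
  ultimately show ?thesis
    by (rule finite_subset)
qed

lemma rich_column_in_ideal:
  assumes "Z \<subseteq> X" "finite_to_one_on label Z" "rich i"
  shows "{a\<in>Z. b a = i} \<in> I"
proof (rule column_in_ideal)
  show "{a\<in>Z. b a = i} \<subseteq> {a\<in>X. b a = i}"
    using \<open>Z \<subseteq> X\<close> by blast
  have "{a\<in>{a\<in>Z. b a = i}. p a = j} = {a\<in>Z. label a = (i, j)}" for j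
    using \<open>rich i\<close> unfolding label_def by auto
  then show "finite_to_one_on p {a\<in>Z. b a = i}"
    using assms(2) unfolding finite_to_one_on_def by simp
qed

lemma finite_to_one_label_in_ideal:
  assumes "Z \<subseteq> X" and thin: "finite_to_one_on label Z"
    and few_rich: "finite {i. rich i \<and> infinite {a\<in>Z. b a = i}}"
  shows "Z \<in> I"
proof -
  define R where "R = {i. rich i \<and> infinite {a\<in>Z. b a = i}}"
  have "(\<Union>i\<in>R. {a\<in>Z. b a = i}) \<in> I"
    using few_rich rich_column_in_ideal[OF assms(1,2)] unfolding R_def by (intro ideal_UN[OF ideal]) auto
  moreover have "{a\<in>Z. b a \<notin> R} \<in> I"
  proof (rule row_in_ideal)
    show "{a\<in>Z. b a \<notin> R} \<subseteq> X"
      using \<open>Z \<subseteq> X\<close> by blast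
    show "finite_to_one_on b {a\<in>Z. b a \<notin> R}"
      unfolding finite_to_one_on_def
    proof
      fix i
      show "finite {a\<in>{a\<in>Z. b a \<notin> R}. b a = i}"
      proof (cases "i \<in> R")
        case True
        then have "{a\<in>{a\<in>Z. b a \<notin> R}. b a = i} = {}"
          by auto
        then show ?thesis
          by (metis finite.emptyI)
      next
        case False
        then have "finite {a\<in>Z. b a = i}"
          using nonrich_column_finite[OF thin] unfolding R_def by blast
        moreover have "{a\<in>{a\<in>Z. b a \<notin> R}. b a = i} \<subseteq> {a\<in>Z. b a = i}"
          by blast
        ultimately show ?thesis
          by (rule finite_subset[rotated])
      qed
    qed
  qed
  moreover have "Z \<subseteq> (\<Union>i\<in>R. {a\<in>Z. b a = i}) \<union> {a\<in>Z. b a \<notin> R}"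
    by blast
  ultimately show ?thesis
    using ideal_cover[OF ideal] by blast
qed

lemma ideal_below_BI_if_finitely_many_rich:
  assumes "finite {i. rich i}"
  shows "ideal_below BI I"
proof (rule ideal_below_BI_if_finite_to_one_sets_in_ideal[OF ideal countable label_fibre_in_ideal])
  fix Z
  assume "Z \<subseteq> X" "finite_to_one_on label Z"
  moreover have "finite {i. rich i \<and> infinite {a\<in>Z. b a = i}}"
    using assms by (rule finite_subset[rotated]) blast
  ultimately show "Z \<in> I"
    by (rule finite_to_one_label_in_ideal)
qed

definition column_index :: "nat \<times> nat \<Rightarrow> nat" where
  "column_index v = (if rich (fst v) then to_nat_on {i. rich i} (fst v) else 0)"

definition row_index :: "nat \<times> nat \<Rightarrow> nat" where
  "row_index v =
    (if rich (fst v) then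
       (if snd v \<in> infinite_rows (fst v) then to_nat_on (infinite_rows (fst v)) (snd v) else 0)
     else fst v)"

lemma column_index_inverse:
  assumes "rich i" "column_index (i, j) = k"
  shows "i = from_nat_into {i. rich i} k"
  using assms from_nat_into_to_nat_on[of "{i. rich i}" i] unfolding column_index_def
  by simp

lemma nonrich_column_in_ideal: "{a\<in>X. b a = l \<and> \<not> rich l} \<in> I"
proof (cases "rich l")
  case True
  then show ?thesis
    using ideal_finite[OF ideal, of "{}"] by simp
next
  case False
  then have "{a\<in>X. b a = l} \<in> I"
    unfolding rich_def by simp
  then show ?thesis
    by (rule ideal_mono[OF ideal]) blast
qed

lemma reindexed_fibre_bounds:
  assumes "infinite {i. rich i}"
  obtains i j where "j \<in> infinite_rows i"
    and "{a\<in>X. b a = i \<and> p a = j} \<subseteq> {a\<in>X. column_index (label a) = k \<and> row_index (label a) = l}"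
    and "{a\<in>X. column_index (label a) = k \<and> row_index (label a) = l} \<subseteq>
      {a\<in>X. b a = i \<and> p a = j} \<union> ({a\<in>X. b a = i \<and> p a \<notin> infinite_rows i} \<union> {a\<in>X. b a = l \<and> \<not> rich l})"
proof -
  define i where "i = from_nat_into {i. rich i} k"
  define j where "j = from_nat_into (infinite_rows i) l"
  have "{i. rich i} \<noteq> {}"
    using assms by (metis finite.emptyI)
  then have "rich i" "to_nat_on {i. rich i} i = k"
    using assms from_nat_into[of "{i. rich i}" k] unfolding i_def by auto
  have "infinite_rows i \<noteq> {}"
    using infinite_infinite_rows[OF \<open>rich i\<close>] by (metis finite.emptyI)
  then have "j \<in> infinite_rows i" "to_nat_on (infinite_rows i) j = l"
    using infinite_infinite_rows[OF \<open>rich i\<close>] from_nat_into[of "infinite_rows i" l] unfolding j_def by auto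
  have "{a\<in>X. b a = i \<and> p a = j} \<subseteq> {a\<in>X. column_index (label a) = k \<and> row_index (label a) = l}"
    using \<open>rich i\<close> \<open>to_nat_on {i. rich i} i = k\<close> \<open>j \<in> infinite_rows i\<close> \<open>to_nat_on (infinite_rows i) j = l\<close>
    unfolding column_index_def row_index_def label_def by auto
  moreover have "{a\<in>X. column_index (label a) = k \<and> row_index (label a) = l} \<subseteq>
      {a\<in>X. b a = i \<and> p a = j} \<union> ({a\<in>X. b a = i \<and> p a \<notin> infinite_rows i} \<union> {a\<in>X. b a = l \<and> \<not> rich l})"
  proof
    fix a
    assume a: "a \<in> {a\<in>X. column_index (label a) = k \<and> row_index (label a) = l}"
    show "a \<in> {a\<in>X. b a = i \<and> p a = j} \<union> ({a\<in>X. b a = i \<and> p a \<notin> infinite_rows i} \<union> {a\<in>X. b a = l \<and> \<not> rich l})"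
    proof (cases "rich (b a)")
      case True
      then have "b a = i"
        using a column_index_inverse[of "b a" "p a" k] unfolding i_def label_def by simp
      moreover have "p a = j" if "p a \<in> infinite_rows i"
      proof -
        have "to_nat_on (infinite_rows i) (p a) = l"
          using a that True \<open>b a = i\<close> unfolding row_index_def label_def by simp
        then show ?thesis
          unfolding j_def by (metis that from_nat_into_to_nat_on countableI_type)
      qed
      ultimately show ?thesis
        using a by blast
    next
      case False
      then show ?thesis
        using a unfolding row_index_def label_def by simp
    qed
  qed
  ultimately show ?thesis
    using that \<open>j \<in> infinite_rows i\<close> by blast
qed

lemma reindexed_column_in_ideal:
  assumes Z: "Z \<subseteq> {a\<in>X. column_index (label a) = k}"
    and thin: "finite_to_one_on (\<lambda>a. row_index (label a)) Z"
  shows "Z \<in> I"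
proof (rule finite_to_one_label_in_ideal)
  show "Z \<subseteq> X"
    using Z by blast
  show "finite_to_one_on label Z"
    using thin by (rule finite_to_one_on_compD)
  have "{i. rich i \<and> infinite {a\<in>Z. b a = i}} \<subseteq> {from_nat_into {i. rich i} k}"
  proof clarify
    fix i
    assume "rich i" "infinite {a\<in>Z. b a = i}"
    then obtain a where "a \<in> Z" "b a = i"
      by (metis (mono_tags, lifting) empty_Collect_eq finite.emptyI)
    then show "i = from_nat_into {i. rich i} k"
      using Z \<open>rich i\<close> column_index_inverse[of i "p a" k] unfolding label_def by auto
  qed
  then show "finite {i. rich i \<and> infinite {a\<in>Z. b a = i}}"
    by (rule finite_subset) simp
qed

lemma reindexed_row_in_ideal:
  assumes "Z \<subseteq> X" and thin: "finite_to_one_on (\<lambda>a. column_index (label a)) Z"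
  shows "Z \<in> I"
proof (rule finite_to_one_label_in_ideal[OF \<open>Z \<subseteq> X\<close>])
  show "finite_to_one_on label Z"
    using thin by (rule finite_to_one_on_compD)
  have "finite {a\<in>Z. b a = i}" if "rich i" for i
  proof -
    have "{a\<in>Z. b a = i} \<subseteq> {a\<in>Z. column_index (label a) = column_index (i, 0)}"
      using that unfolding column_index_def label_def by auto
    moreover have "finite {a\<in>Z. column_index (label a) = column_index (i, 0)}"
      using thin unfolding finite_to_one_on_def by blast
    ultimately show ?thesis
      by (rule finite_subset)
  qed
  then have "{i. rich i \<and> infinite {a\<in>Z. b a = i}} = {}"
    by blast
  then show "finite {i. rich i \<and> infinite {a\<in>Z. b a = i}}"
    by (metis finite.emptyI)
qed

lemma BI_pattern_reindexed:
  assumes "infinite {i. rich i}"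
  shows "BI_pattern X I (\<lambda>a. column_index (label a)) (\<lambda>a. row_index (label a))"
proof
  show "{a\<in>X. column_index (label a) = k \<and> row_index (label a) = l} \<in> I" for k l
  proof -
    obtain i j where "j \<in> infinite_rows i"
      and "{a\<in>X. b a = i \<and> p a = j} \<subseteq> {a\<in>X. column_index (label a) = k \<and> row_index (label a) = l}"
      and cover: "{a\<in>X. column_index (label a) = k \<and> row_index (label a) = l} \<subseteq>
        {a\<in>X. b a = i \<and> p a = j} \<union> ({a\<in>X. b a = i \<and> p a \<notin> infinite_rows i} \<union> {a\<in>X. b a = l \<and> \<not> rich l})"
      by (rule reindexed_fibre_bounds[OF assms])
    show ?thesis
      using ideal_cover[OF ideal cover fibre_in_ideal
          ideal_Un[OF ideal outside_infinite_rows_in_ideal nonrich_column_in_ideal]] .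
  qed
qed (fact ideal countable reindexed_column_in_ideal reindexed_row_in_ideal)+

lemma ideal_below_BI_if_infinitely_many_rich:
  assumes "infinite {i. rich i}"
  shows "ideal_below BI I"
proof (rule BI_pattern.ideal_below_BI_if_infinite_fibres[OF BI_pattern_reindexed[OF assms]])
  fix k l
  obtain i j where "j \<in> infinite_rows i"
    and "{a\<in>X. b a = i \<and> p a = j} \<subseteq> {a\<in>X. column_index (label a) = k \<and> row_index (label a) = l}"
    and "{a\<in>X. column_index (label a) = k \<and> row_index (label a) = l} \<subseteq>
      {a\<in>X. b a = i \<and> p a = j} \<union> ({a\<in>X. b a = i \<and> p a \<notin> infinite_rows i} \<union> {a\<in>X. b a = l \<and> \<not> rich l})"
    by (rule reindexed_fibre_bounds[OF assms])
  then show "infinite {a\<in>X. column_index (label a) = k \<and> row_index (label a) = l}"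
    unfolding infinite_rows_def using finite_subset by blast
qed

text \<open>If only finitely many columns are \<open>I\<close>-positive, the finite-to-one sets of \<open>label\<close>
  form a \<open>Fin\<^sup>2\<close> pattern; otherwise the positive columns and their infinite fibres are
  reindexed by \<open>\<nat>\<close>.\<close>

theorem ideal_below_BI: "ideal_below BI I"
  using ideal_below_BI_if_finitely_many_rich ideal_below_BI_if_infinitely_many_rich by blast

end

section \<open>Sequences without convergent positive subsequences\<close>

locale nonconvergent_sequence =
  fixes X :: "'a set" and I :: "'a set set" and \<A> :: "nat set set" and x :: "'a \<Rightarrow> mpoint"
  assumes ideal: "is_ideal X I" and countable: "countable X"
    and into: "\<And>a. a \<in> X \<Longrightarrow> x a \<in> mrowka_carrier \<A>"
    and no_limit: "\<And>A y. A \<subseteq> X \<Longrightarrow> A \<notin> I \<Longrightarrow> \<not> limitin (Mrowka \<A>) x y (inf cofinite (principal A))"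
begin

lemma point_preimage_in_ideal: "{a\<in>X. x a = y} \<in> I"
proof (rule ccontr)
  assume positive: "{a\<in>X. x a = y} \<notin> I"
  moreover have "{} \<in> I"
    using ideal_finite[OF ideal, of "{}"] by simp
  ultimately obtain a where "a \<in> X" "x a = y"
    by (metis (mono_tags, lifting) empty_Collect_eq)
  then have "y \<in> topspace (Mrowka \<A>)"
    using into by (auto simp: topspace_Mrowka)
  then have "limitin (Mrowka \<A>) x y (inf cofinite (principal {a\<in>X. x a = y}))"
    by (rule limitin_eventually) (simp add: eventually_cofinite_inf_principal)
  moreover have "{a\<in>X. x a = y} \<subseteq> X"
    by blast
  ultimately show False
    using no_limit positive by blast
qed

lemma finite_to_one_into_Ad_in_ideal:
  assumes "Z \<subseteq> X" "x ` Z \<subseteq> Ad ` \<A>" "finite_to_one_on x Z"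
  shows "Z \<in> I"
  using no_limit[OF assms(1)] limitin_Mrowka_Infty[OF assms(2,3)] by meson

lemma finite_to_one_into_Pt_in_ideal:
  assumes "C \<in> \<A>" "Z \<subseteq> X" "x ` Z \<subseteq> Pt ` C" "finite_to_one_on x Z"
  shows "Z \<in> I"
  using no_limit[OF assms(2)] limitin_Mrowka_Ad[OF assms(1,3,4)] by meson

lemma infinite_Pt_image:
  assumes "Z \<subseteq> X" "Z \<notin> I" "x ` Z \<subseteq> range Pt" "finite_to_one_on x Z"
  shows "infinite {m. Pt m \<in> x ` Z}"
proof
  assume "finite {m. Pt m \<in> x ` Z}"
  moreover have "finite {a\<in>Z. x a = Pt m}" for m
    using assms(4) unfolding finite_to_one_on_def by blast
  ultimately have "finite (\<Union>m\<in>{m. Pt m \<in> x ` Z}. {a\<in>Z. x a = Pt m})"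
    by simp
  moreover have "Z \<subseteq> (\<Union>m\<in>{m. Pt m \<in> x ` Z}. {a\<in>Z. x a = Pt m})"
    using assms(3) by force
  ultimately have "finite Z"
    by (rule finite_subset[rotated])
  then show False
    using ideal_positive_infinite[OF ideal assms(1,2)] by blast
qed

end

text \<open>Here \<open>\<C>\<close> plays the family built before the stage coding \<open>x\<close>: if an \<open>I\<close>-positive
  integer part of \<open>x\<close> escaped it, that stage would have added a limit for this part.\<close>

locale nonconvergent_sequence_over = nonconvergent_sequence +
  fixes \<C> :: "nat set set"
  assumes countable_family: "countable \<C>" and family_subset: "\<C> \<subseteq> \<A>"
    and no_escape: "\<And>Z. Z \<subseteq> X \<Longrightarrow> x ` Z \<subseteq> range Pt \<Longrightarrow> finite_to_one_on x Z \<Longrightarrow>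
      (\<forall>C\<in>\<C>. finite ({m. Pt m \<in> x ` Z} \<inter> C)) \<Longrightarrow> Z \<in> I"
begin

definition least_index :: "nat \<Rightarrow> nat" where
  "least_index m = (LEAST k. m \<in> from_nat_into \<C> k)"

definition point_level :: "mpoint \<Rightarrow> nat" where
  "point_level q = (case q of Pt m \<Rightarrow> if m \<in> \<Union>\<C> then least_index m + 3 else 0 | Ad E \<Rightarrow> 1 | Infty \<Rightarrow> 2)"

lemma least_index_mem:
  assumes "m \<in> \<Union>\<C>"
  shows "m \<in> from_nat_into \<C> (least_index m)" "from_nat_into \<C> (least_index m) \<in> \<A>"
proof -
  obtain C where "C \<in> \<C>" "m \<in> C"
    using assms by blast
  then obtain n where "from_nat_into \<C> n = C"
    using from_nat_into_surj[OF countable_family] by blast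
  with \<open>m \<in> C\<close> show "m \<in> from_nat_into \<C> (least_index m)"
    unfolding least_index_def by (metis LeastI)
  show "from_nat_into \<C> (least_index m) \<in> \<A>"
    using from_nat_into[of \<C>] \<open>C \<in> \<C>\<close> family_subset by blast
qed

lemma point_level_cases:
  shows "point_level q = 0 \<Longrightarrow> \<exists>m. q = Pt m \<and> m \<notin> \<Union>\<C>"
    and "point_level q = 1 \<Longrightarrow> \<exists>E. q = Ad E"
    and "point_level q = 2 \<Longrightarrow> q = Infty"
    and "point_level q = k + 3 \<Longrightarrow> \<exists>m. q = Pt m \<and> m \<in> \<Union>\<C> \<and> least_index m = k"
  unfolding point_level_def by (cases q; simp split: if_splits)+

lemma level_outside_family_in_ideal:
  assumes Z: "Z \<subseteq> {a\<in>X. point_level (x a) = 0}" and "finite_to_one_on x Z"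
  shows "Z \<in> I"
proof (rule no_escape)
  have pt: "\<exists>m. x a = Pt m \<and> m \<notin> \<Union>\<C>" if "a \<in> Z" for a
    using Z that point_level_cases(1) by blast
  show "Z \<subseteq> X"
    using Z by blast
  show "x ` Z \<subseteq> range Pt"
  proof
    fix q
    assume "q \<in> x ` Z"
    then obtain a where "a \<in> Z" "q = x a"
      by blast
    then show "q \<in> range Pt"
      using pt[of a] by auto
  qed
  show "\<forall>C\<in>\<C>. finite ({m. Pt m \<in> x ` Z} \<inter> C)"
  proof
    fix C
    assume "C \<in> \<C>"
    have "{m. Pt m \<in> x ` Z} \<inter> C = {}"
    proof (rule equals0I)
      fix m
      assume "m \<in> {m. Pt m \<in> x ` Z} \<inter> C"
      then obtain a where "a \<in> Z" "x a = Pt m" "m \<in> C"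
        by auto
      then show False
        using pt[of a] \<open>C \<in> \<C>\<close> by auto
    qed
    then show "finite ({m. Pt m \<in> x ` Z} \<inter> C)"
      by (metis finite.emptyI)
  qed
qed fact

lemma level_Ad_in_ideal:
  assumes Z: "Z \<subseteq> {a\<in>X. point_level (x a) = 1}" and "finite_to_one_on x Z"
  shows "Z \<in> I"
proof (rule finite_to_one_into_Ad_in_ideal)
  show "x ` Z \<subseteq> Ad ` \<A>"
  proof
    fix q
    assume "q \<in> x ` Z"
    then obtain a where "a \<in> Z" "q = x a"
      by blast
    then have "a \<in> X" "point_level (x a) = 1"
      using Z by blast+
    then obtain E where "x a = Ad E"
      using point_level_cases(2) by blast
    then show "q \<in> Ad ` \<A>"
      using into[of a] \<open>a \<in> X\<close> \<open>q = x a\<close> by (auto simp: mrowka_carrier_def)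
  qed
qed (use assms in blast)+

lemma level_Infty_in_ideal:
  assumes Z: "Z \<subseteq> {a\<in>X. point_level (x a) = 2}" and "finite_to_one_on x Z"
  shows "Z \<in> I"
proof -
  have "Z \<subseteq> {a\<in>Z. x a = Infty}"
    using Z point_level_cases(3) by blast
  moreover have "finite {a\<in>Z. x a = Infty}"
    using \<open>finite_to_one_on x Z\<close> unfolding finite_to_one_on_def by blast
  ultimately have "finite Z"
    by (rule finite_subset)
  then show ?thesis
    using Z by (intro ideal_finite[OF ideal]) blast+
qed

lemma level_family_member_in_ideal:
  assumes Z: "Z \<subseteq> {a\<in>X. point_level (x a) = k + 3}" and "finite_to_one_on x Z"
  shows "Z \<in> I"
proof (cases "Z = {}")
  case False
  then obtain a where "a \<in> Z"
    by blast
  then have "point_level (x a) = k + 3"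
    using Z by blast
  then obtain m where "m \<in> \<Union>\<C>" "least_index m = k"
    using point_level_cases(4)[OF \<open>point_level (x a) = k + 3\<close>] by blast
  then have "from_nat_into \<C> k \<in> \<A>"
    using least_index_mem(2) by blast
  moreover have "x ` Z \<subseteq> Pt ` from_nat_into \<C> k"
  proof
    fix q
    assume "q \<in> x ` Z"
    then obtain a where "a \<in> Z" "q = x a"
      by blast
    then have "point_level (x a) = k + 3"
      using Z by blast
    then obtain m where "x a = Pt m" "m \<in> \<Union>\<C>" "least_index m = k"
      using point_level_cases(4)[OF \<open>point_level (x a) = k + 3\<close>] by blast
    then show "q \<in> Pt ` from_nat_into \<C> k"
      using \<open>q = x a\<close> least_index_mem(1)[of m] by auto
  qed
  ultimately show ?thesis
    using assms by (intro finite_to_one_into_Pt_in_ideal) auto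
qed (simp add: ideal_finite[OF ideal])

lemma level_column_in_ideal:
  assumes "Z \<subseteq> {a\<in>X. point_level (x a) = i}" and "finite_to_one_on x Z"
  shows "Z \<in> I"
proof -
  have "i = 0 \<or> i = 1 \<or> i = 2 \<or> i = (i - 3) + 3"
    by arith
  then consider "i = 0" | "i = 1" | "i = 2" | k where "i = k + 3"
    by blast
  then show ?thesis
  proof cases
    case 1
    show ?thesis
      using assms unfolding 1 by (rule level_outside_family_in_ideal)
  next
    case 2
    show ?thesis
      using assms unfolding 2 by (rule level_Ad_in_ideal)
  next
    case 3
    show ?thesis
      using assms unfolding 3 by (rule level_Infty_in_ideal)
  next
    case (4 k)
    show ?thesis
      using assms unfolding 4 by (rule level_family_member_in_ideal)
  qed
qed

lemma Pt_image_Int_family_member_finite: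
  assumes thin: "finite_to_one_on (\<lambda>a. point_level (x a)) Z" and "C \<in> \<C>"
  shows "finite ({m. Pt m \<in> x ` Z} \<inter> C)"
proof -
  obtain k where k: "C = from_nat_into \<C> k"
    using from_nat_into_surj[OF countable_family \<open>C \<in> \<C>\<close>] by metis
  \<comment> \<open>\<open>C\<close> only contains integers of level at most \<open>k + 3\<close>, and there are finitely many such terms\<close>
  define pt_index where "pt_index a = (case x a of Pt m \<Rightarrow> m | _ \<Rightarrow> 0)" for a
  have "{m. Pt m \<in> x ` Z} \<inter> C \<subseteq> pt_index ` (\<Union>i\<le>k + 3. {a\<in>Z. point_level (x a) = i})"
  proof
    fix m
    assume "m \<in> {m. Pt m \<in> x ` Z} \<inter> C"
    then obtain a where a: "a \<in> Z" "x a = Pt m" "m \<in> C"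
      by auto
    then have "least_index m \<le> k"
      unfolding least_index_def k by (simp add: Least_le)
    moreover have "m \<in> \<Union>\<C>"
      using a(3) \<open>C \<in> \<C>\<close> by blast
    ultimately have "point_level (x a) \<le> k + 3"
      using a(2) unfolding point_level_def by simp
    then have "a \<in> (\<Union>i\<le>k + 3. {a\<in>Z. point_level (x a) = i})"
      using a(1) by blast
    moreover have "m = pt_index a"
      using a(2) unfolding pt_index_def by simp
    ultimately show "m \<in> pt_index ` (\<Union>i\<le>k + 3. {a\<in>Z. point_level (x a) = i})"
      by (rule image_eqI[rotated])
  qed
  moreover have "finite {a\<in>Z. point_level (x a) = i}" for i
    using thin unfolding finite_to_one_on_def by blast
  then have "finite (pt_index ` (\<Union>i\<le>k + 3. {a\<in>Z. point_level (x a) = i}))"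
    by simp
  ultimately show ?thesis
    by (rule finite_subset)
qed

lemma level_row_in_ideal:
  assumes "Z \<subseteq> X" and thin: "finite_to_one_on (\<lambda>a. point_level (x a)) Z"
  shows "Z \<in> I"
proof -
  define Z' where "Z' = {a\<in>Z. x a \<in> range Pt}"
  have "Z' \<in> I"
  proof (rule no_escape)
    show "Z' \<subseteq> X" "x ` Z' \<subseteq> range Pt"
      using assms(1) unfolding Z'_def by blast+
    have "finite_to_one_on x Z"
      using thin by (rule finite_to_one_on_compD)
    then show "finite_to_one_on x Z'"
      by (rule finite_to_one_on_subset) (simp add: Z'_def)
    show "\<forall>C\<in>\<C>. finite ({m. Pt m \<in> x ` Z'} \<inter> C)"
    proof
      fix C
      assume "C \<in> \<C>"
      have "{m. Pt m \<in> x ` Z'} \<inter> C \<subseteq> {m. Pt m \<in> x ` Z} \<inter> C"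
        unfolding Z'_def by blast
      then show "finite ({m. Pt m \<in> x ` Z'} \<inter> C)"
        using Pt_image_Int_family_member_finite[OF thin \<open>C \<in> \<C>\<close>] by (rule finite_subset)
    qed
  qed
  have cover: "Z \<subseteq> Z' \<union> ({a\<in>Z. point_level (x a) = 1} \<union> {a\<in>Z. point_level (x a) = 2})"
  proof
    fix a
    assume "a \<in> Z"
    then show "a \<in> Z' \<union> ({a\<in>Z. point_level (x a) = 1} \<union> {a\<in>Z. point_level (x a) = 2})"
      by (cases "x a") (auto simp: point_level_def Z'_def)
  qed
  have "finite {a\<in>Z. point_level (x a) = i}" for i
    using thin unfolding finite_to_one_on_def by blast
  then have "{a\<in>Z. point_level (x a) = 1} \<union> {a\<in>Z. point_level (x a) = 2} \<in> I"
    using assms(1) by (intro ideal_finite[OF ideal]) auto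
  with cover \<open>Z' \<in> I\<close> show ?thesis
    by (rule ideal_cover[OF ideal])
qed

lemma BI_pattern_levels: "BI_pattern X I (\<lambda>a. point_level (x a)) (\<lambda>a. to_nat_on (x ` X) (x a))"
proof
  show "{a\<in>X. point_level (x a) = i \<and> to_nat_on (x ` X) (x a) = j} \<in> I" for i j
  proof (rule ideal_mono[OF ideal point_preimage_in_ideal[of "from_nat_into (x ` X) j"]])
    show "{a\<in>X. point_level (x a) = i \<and> to_nat_on (x ` X) (x a) = j} \<subseteq> {a\<in>X. x a = from_nat_into (x ` X) j}"
      using from_nat_into_to_nat_on[OF countable_image[OF countable, of x]] by auto
  qed
  show "Z \<in> I" if "Z \<subseteq> {a\<in>X. point_level (x a) = i}"
    and "finite_to_one_on (\<lambda>a. to_nat_on (x ` X) (x a)) Z" for i Z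
    using that(1) finite_to_one_on_compD[of "to_nat_on (x ` X)" x, OF that(2)]
    by (rule level_column_in_ideal)
  show "Z \<in> I" if "Z \<subseteq> X" "finite_to_one_on (\<lambda>a. point_level (x a)) Z" for Z
    using that by (rule level_row_in_ideal)
qed (fact ideal countable)+

end

context nonconvergent_sequence
begin

lemma escaping_subset_exists:
  assumes "\<not> ideal_below BI I" "countable \<C>" "\<C> \<subseteq> \<A>"
  obtains D Z where "almost_disjoint_from \<C> D" "Z \<subseteq> X" "Z \<notin> I" "x ` Z \<subseteq> Pt ` D"
    "finite_to_one_on x Z"
proof -
  have "\<exists>Z. Z \<subseteq> X \<and> x ` Z \<subseteq> range Pt \<and> finite_to_one_on x Z \<and>
      (\<forall>C\<in>\<C>. finite ({m. Pt m \<in> x ` Z} \<inter> C)) \<and> Z \<notin> I"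
  proof (rule ccontr)
    assume "\<not> ?thesis"
    then interpret nonconvergent_sequence_over X I \<A> x \<C>
      by (intro nonconvergent_sequence_over.intro nonconvergent_sequence_axioms
          nonconvergent_sequence_over_axioms.intro assms(2,3)) blast
    show False
      using BI_pattern.ideal_below_BI[OF BI_pattern_levels] assms(1) by blast
  qed
  then obtain Z where Z: "Z \<subseteq> X" "x ` Z \<subseteq> range Pt" "finite_to_one_on x Z"
    "\<forall>C\<in>\<C>. finite ({m. Pt m \<in> x ` Z} \<inter> C)" "Z \<notin> I"
    by blast
  then have "almost_disjoint_from \<C> {m. Pt m \<in> x ` Z}"
    using infinite_Pt_image unfolding almost_disjoint_from_def by blast
  moreover have "x ` Z \<subseteq> Pt ` {m. Pt m \<in> x ` Z}"
  proof
    fix q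
    assume "q \<in> x ` Z"
    moreover obtain m where "q = Pt m"
      using Z(2) \<open>q \<in> x ` Z\<close> by blast
    ultimately show "q \<in> Pt ` {m. Pt m \<in> x ` Z}"
      by simp
  qed
  ultimately show ?thesis
    using that Z by blast
qed

end

section \<open>Coding sequences by sets of integers\<close>

text \<open>The construction of the family sees a sequence only through a code \<open>N \<subseteq> \<nat>\<close> of its
  integer terms: \<open>prod_encode (to_nat_on X a, m) \<in> N\<close> says that the term at \<open>a\<close> is \<open>Pt m\<close>.\<close>

definition decode_Pt :: "'a set \<Rightarrow> nat set \<Rightarrow> 'a \<Rightarrow> mpoint" where
  "decode_Pt X N a =
    (if \<exists>m. prod_encode (to_nat_on X a, m) \<in> N then Pt (LEAST m. prod_encode (to_nat_on X a, m) \<in> N)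
     else Infty)"

lemma decode_Pt_exists:
  assumes "countable X"
  shows "\<exists>N. \<forall>a\<in>X. \<forall>m. decode_Pt X N a = Pt m \<longleftrightarrow> x a = Pt m"
proof -
  define N where "N = {prod_encode (to_nat_on X a, m) | a m. a \<in> X \<and> x a = Pt m}"
  have code: "prod_encode (to_nat_on X a, m) \<in> N \<longleftrightarrow> x a = Pt m" if "a \<in> X" for a m
  proof
    assume "prod_encode (to_nat_on X a, m) \<in> N"
    then obtain a' m' where "a' \<in> X" "x a' = Pt m'"
      and "prod_encode (to_nat_on X a, m) = prod_encode (to_nat_on X a', m')"
      unfolding N_def by blast
    then have "to_nat_on X a = to_nat_on X a'" "m = m'"
      by simp_all
    then have "a = a'"
      using inj_on_to_nat_on[OF assms] that \<open>a' \<in> X\<close> by (meson inj_onD)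
    then show "x a = Pt m"
      using \<open>x a' = Pt m'\<close> \<open>m = m'\<close> by simp
  next
    assume "x a = Pt m"
    then show "prod_encode (to_nat_on X a, m) \<in> N"
      using that unfolding N_def by blast
  qed
  have "decode_Pt X N a = Pt m \<longleftrightarrow> x a = Pt m" if "a \<in> X" for a m
  proof (cases "\<exists>m. x a = Pt m")
    case True
    then obtain m\<^sub>0 where "x a = Pt m\<^sub>0"
      by blast
    then have "(LEAST m. prod_encode (to_nat_on X a, m) \<in> N) = m\<^sub>0"
      using code[OF that] by (intro Least_equality) auto
    then show ?thesis
      using code[OF that] \<open>x a = Pt m\<^sub>0\<close> unfolding decode_Pt_def by auto
  next
    case False
    then show ?thesis
      using code[OF that] unfolding decode_Pt_def by auto
  qed
  then show ?thesis
    by blast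
qed

lemma Pt_image_finite_to_one_cong:
  assumes agree: "\<And>a m. a \<in> Z \<Longrightarrow> y a = Pt m \<longleftrightarrow> x a = Pt m"
  shows "y ` Z \<subseteq> Pt ` D \<and> finite_to_one_on y Z \<longleftrightarrow> x ` Z \<subseteq> Pt ` D \<and> finite_to_one_on x Z"
proof -
  have "y a \<in> Pt ` D \<longleftrightarrow> x a \<in> Pt ` D" if "a \<in> Z" for a
    by (simp add: image_iff agree[OF that])
  then have images: "y ` Z \<subseteq> Pt ` D \<longleftrightarrow> x ` Z \<subseteq> Pt ` D"
    by (simp add: image_subset_iff)
  show ?thesis
  proof (cases "x ` Z \<subseteq> Pt ` D")
    case True
    have "y a = x a" if "a \<in> Z" for a
    proof -
      have "x a \<in> Pt ` D"
        using True that by (rule subsetD[OF _ imageI])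
      then obtain m where "x a = Pt m"
        by blast
      then show ?thesis
        using agree[OF that] by simp
    qed
    then have "finite_to_one_on y Z \<longleftrightarrow> finite_to_one_on x Z"
      by (rule finite_to_one_on_cong)
    then show ?thesis
      using images by blast
  next
    case False
    then show ?thesis
      using images by blast
  qed
qed

text \<open>Once \<open>D\<close> belongs to the family, the subsequence on \<open>Z\<close> converges to \<open>Ad D\<close>.\<close>

definition subsequence_target :: "'a set \<Rightarrow> 'a set set \<Rightarrow> nat set \<Rightarrow> nat set set \<Rightarrow> nat set \<Rightarrow> bool" where
  "subsequence_target X I N \<C> D \<longleftrightarrow> almost_disjoint_from \<C> D \<and>
     (\<exists>Z\<subseteq>X. Z \<notin> I \<and> decode_Pt X N ` Z \<subseteq> Pt ` D \<and> finite_to_one_on (decode_Pt X N) Z)"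

lemma subsequence_target_iff:
  assumes "\<forall>a\<in>X. \<forall>m. decode_Pt X N a = Pt m \<longleftrightarrow> y a = Pt m"
  shows "subsequence_target X I N \<C> D \<longleftrightarrow>
    almost_disjoint_from \<C> D \<and> (\<exists>Z\<subseteq>X. Z \<notin> I \<and> y ` Z \<subseteq> Pt ` D \<and> finite_to_one_on y Z)"
proof -
  have "decode_Pt X N ` Z \<subseteq> Pt ` D \<and> finite_to_one_on (decode_Pt X N) Z \<longleftrightarrow>
      y ` Z \<subseteq> Pt ` D \<and> finite_to_one_on y Z" if "Z \<subseteq> X" for Z
    by (rule Pt_image_finite_to_one_cong) (use assms that in blast)
  then show ?thesis
    unfolding subsequence_target_def by blast
qed

lemma FinBW_Mrowka_if_targets_realised:
  assumes ideal: "is_ideal X I" and "countable X" and "unboring I" and ad: "almost_disjoint_family \<A>"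
    and realised: "\<And>N. \<exists>\<C>\<subseteq>\<A>. countable \<C> \<and>
      ((\<exists>D. subsequence_target X I N \<C> D) \<longrightarrow> (\<exists>D\<in>\<A>. subsequence_target X I N \<C> D))"
  shows "FinBW (Mrowka \<A>) I"
  unfolding FinBW_iff_limitin Union_ideal[OF ideal]
proof (intro conjI allI impI)
  show "Hausdorff_space (Mrowka \<A>)"
    using ad by (simp add: almost_disjoint_family_iff Hausdorff_space_Mrowka)
  fix x
  assume "\<forall>n\<in>X. x n \<in> topspace (Mrowka \<A>)"
  show "\<exists>A\<subseteq>X. A \<notin> I \<and> (\<exists>y. limitin (Mrowka \<A>) x y (inf cofinite (principal A)))"
  proof (rule ccontr)
    assume "\<not> ?thesis"
    with \<open>\<forall>n\<in>X. x n \<in> topspace (Mrowka \<A>)\<close> interpret nonconvergent_sequence X I \<A> x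
      using ideal \<open>countable X\<close> by unfold_locales (auto simp: topspace_Mrowka)
    obtain N where N: "\<forall>a\<in>X. \<forall>m. decode_Pt X N a = Pt m \<longleftrightarrow> x a = Pt m"
      using decode_Pt_exists[OF countable] by blast
    obtain \<C> where "\<C> \<subseteq> \<A>" "countable \<C>"
      and realised_\<C>: "(\<exists>D. subsequence_target X I N \<C> D) \<longrightarrow> (\<exists>D\<in>\<A>. subsequence_target X I N \<C> D)"
      using realised by blast
    obtain D Z where "almost_disjoint_from \<C> D" "Z \<subseteq> X" "Z \<notin> I" "x ` Z \<subseteq> Pt ` D"
      "finite_to_one_on x Z"
      using escaping_subset_exists \<open>unboring I\<close> \<open>countable \<C>\<close> \<open>\<C> \<subseteq> \<A>\<close> unfolding unboring_def by blast
    then have "subsequence_target X I N \<C> D"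
      unfolding subsequence_target_iff[OF N] by blast
    then obtain D' where "D' \<in> \<A>" "subsequence_target X I N \<C> D'"
      using realised_\<C> by blast
    then obtain Z' where "Z' \<subseteq> X" "Z' \<notin> I" "x ` Z' \<subseteq> Pt ` D'" "finite_to_one_on x Z'"
      unfolding subsequence_target_iff[OF N] by blast
    then show False
      using finite_to_one_into_Pt_in_ideal[OF \<open>D' \<in> \<A>\<close>] by blast
  qed
qed

theorem theorem5p5:
  fixes X :: "'a set" and I :: "'a set set"
  assumes "CH"
    and "countable X" and "infinite X"
    and "is_ideal X I"
    and "unboring I"
  shows "\<exists>\<A>. almost_disjoint_family \<A> \<and> uncountable \<A> \<and> FinBW (Mrowka \<A>) I"
proof -
  have "almost_disjoint_from \<C> D" if "subsequence_target X I N \<C> D" for N \<C> D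
    using that unfolding subsequence_target_def by blast
  then obtain \<A> where "almost_disjoint_family \<A>" "uncountable \<A>"
    and "\<And>N. \<exists>\<C>\<subseteq>\<A>. countable \<C> \<and>
      ((\<exists>D. subsequence_target X I N \<C> D) \<longrightarrow> (\<exists>D\<in>\<A>. subsequence_target X I N \<C> D))"
    using CH_almost_disjoint_diagonalisation[OF \<open>CH\<close>, of "subsequence_target X I"] by blast
  moreover from this have "FinBW (Mrowka \<A>) I"
    using FinBW_Mrowka_if_targets_realised[OF \<open>is_ideal X I\<close> \<open>countable X\<close> \<open>unboring I\<close>] by blast
  ultimately show ?thesis
    by blast
qed

end
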